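(* Let $\mathbf W$ be a general channel with input alphabet $\mathcal X=\mathbb R$, general cost function $\mathbf c$ and $\Gamma\in\mathbb R$, satisfying assumptions (A1) and (A2) below. Then for all $\delta\ge0,\mu\ge0,\lambda\ge0$ with $\delta<1-\mu-\lambda$, $$D(\mu,\lambda,\Gamma|\mathbf W)\le S(\delta,\Gamma|\mathbf W).$$
   Context: A general channel $\mathbf W=\{W^n\}$ with input alphabet $\mathcal X$ and output alphabet $\mathcal Y$ is a sequence of transition probabilities: for each $n$ and $\mathbf x\in\mathcal X^n$, $W^n(\cdot|\mathbf x)$ is a probability measure on $\mathcal Y^n$, measurable in $\mathbf x$. A general cost function is a sequence of functions $c_n:\mathcal X^n\to\mathbb R$; put $\mathcal X^n(\Gamma)=\{\mathbf x:\frac1n c_n(\mathbf x)\le\Gamma\}$. $\mathcal S_\Gamma$ is the set of input processes $\mathbf X=\{X^n\}$ with $\Pr\{X^n\in\mathcal X^n(\Gamma)\}=1$ for all $n$; $Y^n$ denotes the output of $W^n$ for input $X^n$. For a distribution $Q$ on $\mathcal X^n$, $QW^n(B)=\int W^n(B|\mathbf x)Q(d\mathbf x)$. Identification codes: an $(n,N_n,\mu_n,\lambda_n,\Gamma)$ code consists of distributions $Q_1,\dots,Q_{N_n}$ on $\mathcal X^n$ with $Q_i(\mathcal X^n(\Gamma))=1$ and (not necessarily disjoint) sets $\mathcal D_1,\dots,\mathcal D_{N_n}\subset\mathcal Y^n$, with $\mu_n=\max_iQ_iW^n(\mathcal D_i^c)$, $\lambda_n=\max_{i\ne j}Q_jW^n(\mathcal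 D_i)$. $R$ is $(\mu,\lambda,\Gamma)$-achievable if such codes exist with $\limsup\mu_n\le\mu$, $\limsup\lambda_n\le\lambda$, $\liminf\frac1n\log\log N_n\ge R$; $D(\mu,\lambda,\Gamma|\mathbf W)$ is the supremum of such $R$. Resolvability: $d(P,P')=2\sup_B|P(B)-P'(B)|$; $U_M$ is uniform on $\{1,\dots,M\}$. For $\mathbf X\in\mathcal S_\Gamma$, $R$ is $(\delta,\Gamma)$-achievable for $\mathbf X$ if there are $M_n$ and maps $\varphi_n:\{1,\dots,M_n\}\to\mathcal X^n(\Gamma)$ such that, with $\tilde Y^n$ the output of $W^n$ for input $\varphi_n(U_{M_n})$, $\limsup d(P_{Y^n},P_{\tilde Y^n})\le\delta$ and $\limsup\frac1n\log M_n\le R$. $R$ is $(\delta,\Gamma)$-achievable if so for all $\mathbf X\in\mathcal S_\Gamma$; $S(\delta,\Gamma|\mathbf W)$ is the infimum of such $R$. (A1): there exist $n$-dimensional cubes $V_n(\Gamma)\subset\mathbb R^n$ of edge length $l_n(\Gamma)\ge2$ with $\limsup_n\frac1n\log\log l_n(\Gamma)=0$ and $\mathcal X^n(\Gamma)\subset V_n(\Gamma)$ for all $n$. (A2): letting $F_n(\mathbf x)=\left[\frac{\partial^2}{\partial v_i\partial v_j}D(W^n(\cdot|\mathbf v)\|W^n(\cdot|\mathbf x))\right]_{\mathbf v=\mathbf x}$ ($D$ the Kullback–Leibler divergence, twice differentiable in $\mathbf v$) and $\|F_n(\mathbf x)\|=\sup_{\mathbf v\ne\mathbf 0}\frac{\mathbf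 vF_n(\mathbf x)\mathbf v^T}{\mathbf v\mathbf v^T}$, one has $\limsup_n\frac1n\log\max\{1,\log\sup_{\mathbf x\in V_n(\Gamma)}\|F_n(\mathbf x)\|\}=0$. *)

theory Defs
  imports "HOL-Probability.Probability"
begin

definition Rn :: "nat \<Rightarrow> (nat \<Rightarrow> real) measure" where
  "Rn n = PiM {..<n} (\<lambda>_. lborel)"

definition enorm :: "nat \<Rightarrow> (nat \<Rightarrow> real) \<Rightarrow> real" where
  "enorm n v = sqrt (\<Sum>i<n. (v i)\<^sup>2)"

definition Yn :: "'y measure \<Rightarrow> nat \<Rightarrow> (nat \<Rightarrow> 'y) measure" where
  "Yn Y n = PiM {..<n} (\<lambda>_. Y)"

definition general_channel ::
  "'y measure \<Rightarrow> (nat \<Rightarrow> (nat \<Rightarrow> real) \<Rightarrow> (nat \<Rightarrow> 'y) measure) \<Rightarrow> bool" where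
  "general_channel Y W \<longleftrightarrow> (\<forall>n. W n \<in> Rn n \<rightarrow>\<^sub>M prob_algebra (Yn Y n))"

definition Xcost :: "(nat \<Rightarrow> (nat \<Rightarrow> real) \<Rightarrow> real) \<Rightarrow> real \<Rightarrow> nat \<Rightarrow> (nat \<Rightarrow> real) set" where
  "Xcost c \<Gamma> n = {x \<in> space (Rn n). c n x / real n \<le> \<Gamma>}"

definition QW :: "(nat \<Rightarrow> (nat \<Rightarrow> real) \<Rightarrow> (nat \<Rightarrow> 'y) measure) \<Rightarrow> nat
    \<Rightarrow> (nat \<Rightarrow> real) measure \<Rightarrow> (nat \<Rightarrow> 'y) set \<Rightarrow> real" where
  "QW W n Q B = (\<integral>x. measure (W n x) B \<partial>Q)"

definition idrate :: "(nat \<Rightarrow> nat) \<Rightarrow> nat \<Rightarrow> ereal" where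
  "idrate N n = (if N n \<le> 1 then -\<infinity> else ereal (ln (ln (real (N n))) / real n))"

text \<open>R is (mu,lambda,Gamma)-achievable: there are (n,N_n,mu_n,lambda_n,Gamma) codes
  (for every block length n \<ge> 1) with the required asymptotics. mu_n and lambda_n are
  upper bounds of the two error probabilities (equivalently the maxima).\<close>
definition id_achievable ::
  "'y measure \<Rightarrow> (nat \<Rightarrow> (nat \<Rightarrow> real) \<Rightarrow> (nat \<Rightarrow> 'y) measure) \<Rightarrow>
   (nat \<Rightarrow> (nat \<Rightarrow> real) \<Rightarrow> real) \<Rightarrow> real \<Rightarrow> real \<Rightarrow> real \<Rightarrow> real \<Rightarrow> bool" where
  "id_achievable Y W c \<mu> lm \<Gamma> R \<longleftrightarrow>
    (\<exists>(N :: nat \<Rightarrow> nat) (Q :: nat \<Rightarrow> nat \<Rightarrow> (nat \<Rightarrow> real) measure)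
       (Dec :: nat \<Rightarrow> nat \<Rightarrow> (nat \<Rightarrow> 'y) set) (mu :: nat \<Rightarrow> real) (lam :: nat \<Rightarrow> real).
      (\<forall>n\<ge>1. N n \<ge> 1 \<and>
         (\<forall>i\<in>{1..N n}. prob_space (Q n i) \<and> sets (Q n i) = sets (Rn n) \<and>
             Xcost c \<Gamma> n \<in> sets (Rn n) \<and> measure (Q n i) (Xcost c \<Gamma> n) = 1 \<and>
             Dec n i \<in> sets (Yn Y n) \<and>
             QW W n (Q n i) (space (Yn Y n) - Dec n i) \<le> mu n) \<and>
         (\<forall>i\<in>{1..N n}. \<forall>j\<in>{1..N n}. i \<noteq> j \<longrightarrow> QW W n (Q n j) (Dec n i) \<le> lam n)) \<and>
      limsup (\<lambda>n. ereal (mu n)) \<le> ereal \<mu> \<and>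
      limsup (\<lambda>n. ereal (lam n)) \<le> ereal lm \<and>
      liminf (idrate N) \<ge> ereal R)"

definition ID_capacity ::
  "'y measure \<Rightarrow> (nat \<Rightarrow> (nat \<Rightarrow> real) \<Rightarrow> (nat \<Rightarrow> 'y) measure) \<Rightarrow>
   (nat \<Rightarrow> (nat \<Rightarrow> real) \<Rightarrow> real) \<Rightarrow> real \<Rightarrow> real \<Rightarrow> real \<Rightarrow> ereal" where
  "ID_capacity Y W c \<mu> lm \<Gamma> = Sup {ereal R | R. id_achievable Y W c \<mu> lm \<Gamma> R}"

text \<open>Input processes in S_Gamma, given by the distributions of X^n.\<close>
definition input_processes ::
  "(nat \<Rightarrow> (nat \<Rightarrow> real) \<Rightarrow> real) \<Rightarrow> real \<Rightarrow> (nat \<Rightarrow> (nat \<Rightarrow> real) measure) set" where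
  "input_processes c \<Gamma> = {PX. \<forall>n\<ge>1. prob_space (PX n) \<and> sets (PX n) = sets (Rn n) \<and>
       Xcost c \<Gamma> n \<in> sets (Rn n) \<and> measure (PX n) (Xcost c \<Gamma> n) = 1}"

definition var_dist :: "'y measure \<Rightarrow> nat \<Rightarrow> (nat \<Rightarrow> 'y) measure \<Rightarrow> (nat \<Rightarrow> 'y) measure \<Rightarrow> real" where
  "var_dist Y n P P' = 2 * (SUP B \<in> sets (Yn Y n). \<bar>measure P B - measure P' B\<bar>)"

definition res_achievable_for ::
  "'y measure \<Rightarrow> (nat \<Rightarrow> (nat \<Rightarrow> real) \<Rightarrow> (nat \<Rightarrow> 'y) measure) \<Rightarrow>
   (nat \<Rightarrow> (nat \<Rightarrow> real) \<Rightarrow> real) \<Rightarrow> real \<Rightarrow> real \<Rightarrow> real \<Rightarrow>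
   (nat \<Rightarrow> (nat \<Rightarrow> real) measure) \<Rightarrow> bool" where
  "res_achievable_for Y W c \<delta> \<Gamma> R PX \<longleftrightarrow>
    (\<exists>(M :: nat \<Rightarrow> nat) (\<phi> :: nat \<Rightarrow> nat \<Rightarrow> (nat \<Rightarrow> real)).
      (\<forall>n\<ge>1. M n \<ge> 1 \<and> (\<forall>m\<in>{1..M n}. \<phi> n m \<in> Xcost c \<Gamma> n)) \<and>
      limsup (\<lambda>n. ereal (var_dist Y n (PX n \<bind> W n)
          (measure_pmf (pmf_of_set {1..M n}) \<bind> (\<lambda>m. W n (\<phi> n m))))) \<le> ereal \<delta> \<and>
      limsup (\<lambda>n. ereal (ln (real (M n)) / real n)) \<le> ereal R)"

definition Res_capacity ::
  "'y measure \<Rightarrow> (nat \<Rightarrow> (nat \<Rightarrow> real) \<Rightarrow> (nat \<Rightarrow> 'y) measure) \<Rightarrow>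
   (nat \<Rightarrow> (nat \<Rightarrow> real) \<Rightarrow> real) \<Rightarrow> real \<Rightarrow> real \<Rightarrow> ereal" where
  "Res_capacity Y W c \<delta> \<Gamma> =
     Inf {ereal R | R. \<forall>PX \<in> input_processes c \<Gamma>. res_achievable_for Y W c \<delta> \<Gamma> R PX}"

definition has_gradient_at :: "nat \<Rightarrow> ((nat \<Rightarrow> real) \<Rightarrow> real) \<Rightarrow> (nat \<Rightarrow> real) \<Rightarrow> (nat \<Rightarrow> real) \<Rightarrow> bool" where
  "has_gradient_at n g x G \<longleftrightarrow>
    (\<forall>e>0. \<exists>d>0. \<forall>v\<in>space (Rn n). enorm n (\<lambda>i. v i - x i) < d \<longrightarrow>
       \<bar>g v - g x - (\<Sum>i<n. G i * (v i - x i))\<bar> \<le> e * enorm n (\<lambda>i. v i - x i))"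

definition twice_differentiable_at :: "nat \<Rightarrow> ((nat \<Rightarrow> real) \<Rightarrow> real) \<Rightarrow> (nat \<Rightarrow> real) \<Rightarrow> bool" where
  "twice_differentiable_at n g x \<longleftrightarrow>
    (\<exists>G d. d > 0 \<and>
       (\<forall>v\<in>space (Rn n). enorm n (\<lambda>i. v i - x i) < d \<longrightarrow> has_gradient_at n g v (G v)) \<and>
       (\<forall>j<n. \<exists>H. has_gradient_at n (\<lambda>v. G v j) x H))"

definition partial :: "nat \<Rightarrow> ((nat \<Rightarrow> real) \<Rightarrow> real) \<Rightarrow> (nat \<Rightarrow> real) \<Rightarrow> real" where
  "partial j g v = deriv (\<lambda>t. g (v(j := v j + t))) 0"

text \<open>KL divergence D(W^n(.|v) || W^n(.|x)) (natural logarithm), and its finiteness.\<close>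
definition KLW :: "(nat \<Rightarrow> (nat \<Rightarrow> real) \<Rightarrow> (nat \<Rightarrow> 'y) measure) \<Rightarrow> nat \<Rightarrow>
    (nat \<Rightarrow> real) \<Rightarrow> (nat \<Rightarrow> real) \<Rightarrow> real" where
  "KLW W n x v = KL_divergence (exp 1) (W n x) (W n v)"

definition KLW_finite :: "(nat \<Rightarrow> (nat \<Rightarrow> real) \<Rightarrow> (nat \<Rightarrow> 'y) measure) \<Rightarrow> nat \<Rightarrow>
    (nat \<Rightarrow> real) \<Rightarrow> (nat \<Rightarrow> real) \<Rightarrow> bool" where
  "KLW_finite W n x v \<longleftrightarrow> absolutely_continuous (W n x) (W n v) \<and>
     integrable (W n v) (entropy_density (exp 1) (W n x) (W n v))"

definition Fmat :: "(nat \<Rightarrow> (nat \<Rightarrow> real) \<Rightarrow> (nat \<Rightarrow> 'y) measure) \<Rightarrow> nat \<Rightarrow>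
    (nat \<Rightarrow> real) \<Rightarrow> nat \<Rightarrow> nat \<Rightarrow> real" where
  "Fmat W n x i j = partial i (partial j (KLW W n x)) x"

definition quad_norm :: "nat \<Rightarrow> (nat \<Rightarrow> nat \<Rightarrow> real) \<Rightarrow> real" where
  "quad_norm n F = Sup {(\<Sum>i<n. \<Sum>j<n. v i * F i j * v j) / (\<Sum>i<n. (v i)\<^sup>2) | v.
                         v \<in> space (Rn n) \<and> (\<exists>i<n. v i \<noteq> 0)}"

definition cube :: "nat \<Rightarrow> (nat \<Rightarrow> real) \<Rightarrow> real \<Rightarrow> (nat \<Rightarrow> real) set" where
  "cube n a l = {x \<in> space (Rn n). \<forall>i<n. a i \<le> x i \<and> x i \<le> a i + l}"

text \<open>(1/n) log max{1, log s} with s in [-inf, inf]; log of a nonpositive number is -inf.\<close>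
definition A2_term :: "nat \<Rightarrow> ereal \<Rightarrow> ereal" where
  "A2_term n s = (if s = \<infinity> then \<infinity>
     else ereal (ln (max 1 (ln (max 1 (real_of_ereal s)))) / real n))"

text \<open>Assumptions (A1) and (A2) (sharing the same cubes V_n(Gamma)).\<close>
definition A1_A2 :: "(nat \<Rightarrow> (nat \<Rightarrow> real) \<Rightarrow> (nat \<Rightarrow> 'y) measure) \<Rightarrow>
    (nat \<Rightarrow> (nat \<Rightarrow> real) \<Rightarrow> real) \<Rightarrow> real \<Rightarrow> bool" where
  "A1_A2 W c \<Gamma> \<longleftrightarrow>
    (\<exists>(a :: nat \<Rightarrow> nat \<Rightarrow> real) (l :: nat \<Rightarrow> real).
       \<comment> \<open>(A1)\<close>
       (\<forall>n\<ge>1. l n \<ge> 2 \<and> Xcost c \<Gamma> n \<subseteq> cube n (a n) (l n)) \<and>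
       limsup (\<lambda>n. ereal (ln (ln (l n)) / real n)) = 0 \<and>
       \<comment> \<open>(A2): D twice differentiable in v at v = x, and the growth condition\<close>
       (\<forall>n\<ge>1. \<forall>x \<in> cube n (a n) (l n).
          (\<exists>d>0. \<forall>v\<in>space (Rn n). enorm n (\<lambda>i. v i - x i) < d \<longrightarrow> KLW_finite W n x v) \<and>
          twice_differentiable_at n (KLW W n x) x) \<and>
       limsup (\<lambda>n. A2_term n (SUP x \<in> cube n (a n) (l n). ereal (quad_norm n (Fmat W n x)))) = 0)"

end

theory Submission
  imports Defs "HOL-Real_Asymp.Real_Asymp"
begin

text \<open>Suppose \<open>R\<^sub>1\<close> is an achievable identification rate and \<open>R\<^sub>2 < R\<^sub>1\<close> a
  resolvability rate. Resolvability, applied to an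
  input process that always picks a message for which it would fail, shows that the output
  distribution of every message is, on every event, within \<open>(\<delta> + \<epsilon>) / 2\<close> of the output of a
  uniform mixture of at most \<open>e\<^bsup>n(R\<^sub>2+\<epsilon>)\<^esup>\<close> codewords. By (A2) and a Pinsker-type bound,
  \<open>x \<mapsto> W\<^sup>n(B|x)\<close> is Lipschitz on the cube of (A1) with constant \<open>2 \<surd>(\<parallel>F\<^sub>n\<parallel> + 1)\<close>,
  so rounding the codewords to a fine grid moves these probabilities by at most \<open>\<epsilon>\<close>. As
  \<open>\<delta> + \<mu> + \<lambda> < 1\<close>, distinct messages keep distinct rounded codebooks, and counting these
  gives \<open>ln ln N \<le> n (R\<^sub>2 + \<epsilon>) + o(n)\<close>, the \<open>o(n)\<close> coming from the growth conditions in
  (A1) and (A2).\<close>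

section \<open>A Pinsker-type inequality\<close>

lemma sq_sub_one_le_x_ln_x_of_le_one:
  fixes D :: real assumes "0 < D" "D \<le> 1"
  shows "(D - 1)\<^sup>2 / 2 \<le> D * ln D - D + 1"
proof -
  let ?f = "\<lambda>t::real. t * ln t - t + 1 - (t - 1)\<^sup>2 / 2"
  have "?f 1 \<le> ?f D"
  proof (rule DERIV_nonpos_imp_nonincreasing[OF assms(2)])
    fix x assume "D \<le> x" "x \<le> 1"
    then have "0 < x" using assms by simp
    then show "\<exists>y. DERIV ?f x :> y \<and> y \<le> 0"
      using ln_le_minus_one[of x] by (intro exI conjI) (auto intro!: derivative_eq_intros)
  qed
  then show ?thesis by simp
qed

lemma sq_sub_one_le_x_ln_x_of_ge_one:
  fixes D :: real assumes "1 \<le> D"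
  shows "(D - 1)\<^sup>2 / (2 * D) \<le> D * ln D - D + 1"
proof -
  let ?f = "\<lambda>t::real. t * ln t - t + 1 - (t - 1)\<^sup>2 / (2 * t)"
  have "?f 1 \<le> ?f D"
  proof (rule DERIV_nonneg_imp_nondecreasing[OF assms])
    fix x assume x: "1 \<le> x" "x \<le> D"
    have "ln (1 / x) \<le> 1 / x - 1" using x by (intro ln_le_minus_one) simp
    then have "1 - 1 / x \<le> ln x" using x by (simp add: ln_div)
    moreover have "(1 - 1 / x)\<^sup>2 / 2 = 1 - 1 / x - 1 / 2 + 1 / (2 * x\<^sup>2)"
      using x by (simp add: field_simps power2_eq_square)
    moreover have "0 \<le> (1 - 1 / x)\<^sup>2 / 2" by simp
    ultimately have "0 \<le> ln x - 1 / 2 + 1 / (2 * x\<^sup>2)" by linarith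
    moreover have "DERIV ?f x :> ln x - 1 / 2 + 1 / (2 * x\<^sup>2)"
      using x by (auto intro!: derivative_eq_intros simp: field_simps power2_eq_square)
    ultimately show "\<exists>y. DERIV ?f x :> y \<and> 0 \<le> y" by blast
  qed
  then show ?thesis by simp
qed

lemma x_ln_x_sub_x_plus_one_nonneg:
  fixes D :: real assumes "0 \<le> D"
  shows "0 \<le> D * ln D - D + 1"
proof (cases "D = 0")
  case False
  then have "D * ln (1 / D) \<le> D * (1 / D - 1)"
    using assms by (intro mult_left_mono ln_le_minus_one) auto
  then show ?thesis using False assms by (simp add: ln_div algebra_simps)
qed simp

text \<open>Both bounds combine into \<open>(D - 1)\<^sup>2 / (2 max D 1) \<le> h D\<close> for
  \<open>h D = D ln D - D + 1\<close>; AM-GM then trades \<open>\<bar>D - 1\<bar>\<close> against \<open>h D\<close>.\<close>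
lemma abs_sub_one_le_x_ln_x:
  fixes D s :: real assumes "0 \<le> D" "0 < s"
  shows "\<bar>D - 1\<bar> \<le> s * (D * ln D - D + 1) + (D + 1) / (2 * s)"
proof (cases "D = 0")
  case True
  have "0 \<le> (s - 1)\<^sup>2 + s\<^sup>2" by simp
  then show ?thesis using True assms by (simp add: field_simps power2_eq_square)
next
  case False
  define m where "m = max D 1"
  have m: "0 < m" "m \<le> D + 1" unfolding m_def using assms by auto
  have h: "(D - 1)\<^sup>2 / (2 * m) \<le> D * ln D - D + 1"
    using sq_sub_one_le_x_ln_x_of_le_one[of D] sq_sub_one_le_x_ln_x_of_ge_one[of D] False assms
    unfolding m_def by (cases "D \<le> 1") auto
  have "0 \<le> (s * \<bar>D - 1\<bar> - m)\<^sup>2 / (2 * s * m)" using m assms by simp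
  also have "\<dots> = s * ((D - 1)\<^sup>2 / (2 * m)) + m / (2 * s) - \<bar>D - 1\<bar>"
    using m assms by (simp add: field_simps power2_eq_square)
  finally have "\<bar>D - 1\<bar> \<le> s * ((D - 1)\<^sup>2 / (2 * m)) + m / (2 * s)" by simp
  also have "\<dots> \<le> s * (D * ln D - D + 1) + (D + 1) / (2 * s)"
    using h m assms by (intro add_mono mult_left_mono divide_right_mono) auto
  finally show ?thesis .
qed

lemma le_two_sqrt_if_le_scaled_sum:
  fixes X K :: real
  assumes K: "0 \<le> K" and le: "\<And>s. 0 < s \<Longrightarrow> X \<le> s * K + 1 / s"
  shows "X \<le> 2 * sqrt K"
proof (cases "K = 0")
  case True
  show ?thesis
  proof (rule ccontr)
    assume "\<not> ?thesis"
    then have "0 < X" using True by simp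
    then show False using le[of "2 / X"] True by simp
  qed
next
  case False
  then have "0 < sqrt K" using K by simp
  then show ?thesis using le[of "1 / sqrt K"] K by (simp add: real_div_sqrt)
qed

lemma abs_measure_density_diff_le:
  fixes D :: "'a \<Rightarrow> real"
  assumes M: "prob_space M" and [measurable]: "D \<in> borel_measurable M"
    and D0: "\<And>x. 0 \<le> D x" and intD: "integrable M D" and D1: "(\<integral>x. D x \<partial>M) = 1"
    and intDl: "integrable M (\<lambda>x. D x * ln (D x))" and B: "B \<in> sets M"
  shows "\<bar>measure (density M D) B - measure M B\<bar> \<le> 2 * sqrt (\<integral>x. D x * ln (D x) \<partial>M)"
proof -
  interpret prob_space M by fact
  let ?h = "\<lambda>x. D x * ln (D x) - D x + 1"
  let ?K = "\<integral>x. D x * ln (D x) \<partial>M"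
  have inth: "integrable M ?h" using intDl intD by simp
  have K: "?K = (\<integral>x. ?h x \<partial>M)"
    using intDl intD D1 by (simp add: prob_space)
  have "0 \<le> ?K" unfolding K
    by (intro integral_nonneg_AE AE_I2 x_ln_x_sub_x_plus_one_nonneg D0)
  have intD': "integrable M (\<lambda>x. D x - 1)" using intD by simp
  have diff: "measure (density M D) B - measure M B = (\<integral>x. (D x - 1) * indicator B x \<partial>M)"
  proof -
    have "measure (density M D) B = (\<integral>x. indicator B x \<partial>density M D)"
      using B by simp
    also have "\<dots> = (\<integral>x. D x * indicator B x \<partial>M)"
      using B D0 by (subst integral_density) auto
    finally have "measure (density M D) B = (\<integral>x. D x * indicator B x \<partial>M)" .
    moreover have "(\<integral>x. (D x - 1) * indicator B x \<partial>M)
        = (\<integral>x. D x * indicator B x \<partial>M) - (\<integral>x. 1 * indicator B x \<partial>M)"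
      unfolding left_diff_distrib
      using B intD by (intro Bochner_Integration.integral_diff integrable_real_mult_indicator) auto
    ultimately show ?thesis using B by simp
  qed
  have "\<bar>measure (density M D) B - measure M B\<bar> \<le> s * ?K + 1 / s" if s: "0 < s" for s
  proof -
    have "\<bar>measure (density M D) B - measure M B\<bar> \<le> (\<integral>x. \<bar>(D x - 1) * indicator B x\<bar> \<partial>M)"
      unfolding diff by (rule integral_abs_bound)
    also have "\<dots> \<le> (\<integral>x. \<bar>D x - 1\<bar> \<partial>M)"
      using B intD' by (intro integral_mono integrable_abs integrable_real_mult_indicator)
        (auto split: split_indicator)
    also have "\<dots> \<le> (\<integral>x. s * ?h x + (D x + 1) / (2 * s) \<partial>M)"
      using inth intD by (intro integral_mono abs_sub_one_le_x_ln_x D0 s integrable_abs intD') auto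
    also have "\<dots> = s * ?K + 1 / s"
      using inth intD D1 s K by (simp add: prob_space)
    finally show ?thesis .
  qed
  then show ?thesis by (rule le_two_sqrt_if_le_scaled_sum[OF \<open>0 \<le> ?K\<close>])
qed

lemma KL_divergence_density_representation:
  fixes M N :: "'a measure"
  assumes pM: "prob_space M" and pN: "prob_space N" and ac: "absolutely_continuous M N"
    and sN: "sets N = sets M" and int: "integrable N (entropy_density (exp 1) M N)"
  obtains D :: "'a \<Rightarrow> real" where "D \<in> borel_measurable M" "\<And>x. 0 \<le> D x" "N = density M D"
    "integrable M D" "(\<integral>x. D x \<partial>M) = 1" "integrable M (\<lambda>x. D x * ln (D x))"
    "KL_divergence (exp 1) M N = (\<integral>x. D x * ln (D x) \<partial>M)"
proof -
  interpret M: prob_space M by fact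
  interpret N: prob_space N by fact
  have "finite_measure N" by unfold_locales
  from M.real_RN_deriv[OF this ac sN] obtain D where D[measurable]: "D \<in> borel_measurable M"
      and RN: "AE x in M. RN_deriv M N x = ennreal (D x)" and D0: "\<And>x. 0 \<le> D x"
    by metis
  have "N = density M (RN_deriv M N)"
    using ac sN by (rule M.density_RN_deriv[symmetric])
  also have "\<dots> = density M D"
    using RN by (auto intro!: density_cong)
  finally have N: "N = density M D" .
  have "integrable N (\<lambda>x. ln (D x))"
    using absolutely_continuous_AE[OF sN ac RN] D0
    by (intro integrable_cong_AE[THEN iffD2, OF _ _ _ int])
      (auto simp: N entropy_density_def log_def)
  then have intDl: "integrable M (\<lambda>x. D x * ln (D x))"
    using D0 by (subst integrable_real_density[symmetric]) (auto simp: N[symmetric] comp_def)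
  have "integrable M (\<lambda>x. D x * 1)"
    using D0 by (subst integrable_real_density[symmetric]) (auto simp: N[symmetric])
  then have intD: "integrable M D" by simp
  have "(\<integral>x. 1 \<partial>N) = (1::real)" by (simp add: N.prob_space)
  then have D1: "(\<integral>x. D x \<partial>M) = 1"
    using D0 by (subst (asm) N, subst (asm) integral_density) auto
  have "KL_divergence (exp 1) M N = (\<integral>x. D x * ln (D x) \<partial>M)"
    unfolding N using D0 by (subst M.KL_density) (auto simp: log_def)
  with D D0 N intD D1 intDl show ?thesis by (rule that)
qed

lemma abs_measure_diff_le_sqrt_KL:
  fixes M N :: "'a measure"
  assumes "prob_space M" "prob_space N" "absolutely_continuous M N" "sets N = sets M"
    and "integrable N (entropy_density (exp 1) M N)" and B: "B \<in> sets M"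
  shows "\<bar>measure N B - measure M B\<bar> \<le> 2 * sqrt (KL_divergence (exp 1) M N)"
proof -
  obtain D where "D \<in> borel_measurable M" "\<And>x. 0 \<le> D x" "N = density M D"
    "integrable M D" "(\<integral>x. D x \<partial>M) = 1" "integrable M (\<lambda>x. D x * ln (D x))"
    "KL_divergence (exp 1) M N = (\<integral>x. D x * ln (D x) \<partial>M)"
    using KL_divergence_density_representation[OF assms(1-5)] by blast
  with abs_measure_density_diff_le[OF \<open>prob_space M\<close> _ _ _ _ _ B] show ?thesis by simp
qed

lemma KL_divergence_nonneg_of_integrable:
  fixes M N :: "'a measure"
  assumes "prob_space M" "prob_space N" "absolutely_continuous M N" "sets N = sets M"
    and "integrable N (entropy_density (exp 1) M N)"
  shows "0 \<le> KL_divergence (exp 1) M N"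
proof -
  interpret information_space M "exp 1"
    using \<open>prob_space M\<close> by (simp add: information_space_def information_space_axioms_def prob_space_def)
  obtain D where D: "D \<in> borel_measurable M" "\<And>x. 0 \<le> D x" and N: "N = density M D"
    and int: "integrable M (\<lambda>x. D x * ln (D x))"
    using KL_divergence_density_representation[OF assms] by blast
  have "0 \<le> KL_divergence (exp 1) M (density M D)"
    using \<open>prob_space N\<close> D int unfolding N by (intro KL_nonneg) (auto simp: log_def)
  then show ?thesis unfolding N .
qed

section \<open>Calculus on \<open>\<real>\<^sup>n\<close>\<close>

lemma space_Rn: "space (Rn n) = {x. \<forall>i. n \<le> i \<longrightarrow> x i = undefined}"
  unfolding Rn_def space_PiM PiE_def extensional_def Pi_def by auto

lemma restrict_lessThan_Rn: "x \<in> space (Rn n) \<Longrightarrow> restrict x {..<n} = x"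
  unfolding space_Rn by (auto simp: restrict_def fun_eq_iff)

definition line_point :: "nat \<Rightarrow> (nat \<Rightarrow> real) \<Rightarrow> (nat \<Rightarrow> real) \<Rightarrow> real \<Rightarrow> (nat \<Rightarrow> real)" where
  "line_point n y h t = restrict (\<lambda>i. y i + t * h i) {..<n}"

definition unit_vec :: "nat \<Rightarrow> nat \<Rightarrow> real" where
  "unit_vec j = (\<lambda>i. if i = j then 1 else 0)"

lemma line_point_in_space: "line_point n y h t \<in> space (Rn n)"
  unfolding space_Rn line_point_def by auto

lemma line_point_apply: "i < n \<Longrightarrow> line_point n y h t i = y i + t * h i"
  unfolding line_point_def by auto

lemma line_point_0: "y \<in> space (Rn n) \<Longrightarrow> line_point n y h 0 = y"
  unfolding line_point_def using restrict_lessThan_Rn[of y n] by simp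

lemma line_point_1: "v \<in> space (Rn n) \<Longrightarrow> line_point n x (\<lambda>i. v i - x i) 1 = v"
  unfolding line_point_def using restrict_lessThan_Rn[of v n] by simp

lemma line_point_line_point: "line_point n (line_point n y h s) h t = line_point n y h (t + s)"
  unfolding line_point_def by (auto simp: restrict_def fun_eq_iff algebra_simps)

lemma fun_upd_eq_line_point:
  "v \<in> space (Rn n) \<Longrightarrow> j < n \<Longrightarrow> v(j := v j + t) = line_point n v (unit_vec j) t"
  unfolding line_point_def unit_vec_def space_Rn by (auto simp: fun_eq_iff)

lemma enorm_cong: "(\<And>i. i < n \<Longrightarrow> f i = g i) \<Longrightarrow> enorm n f = enorm n g"
  unfolding enorm_def by (intro arg_cong[where f=sqrt] sum.cong) auto

lemma enorm_nonneg: "0 \<le> enorm n f"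
  unfolding enorm_def by (intro real_sqrt_ge_zero sum_nonneg) auto

lemma enorm_power2: "(enorm n h)\<^sup>2 = (\<Sum>i<n. (h i)\<^sup>2)"
  unfolding enorm_def by (simp add: sum_nonneg)

lemma enorm_zero: "enorm n (\<lambda>i. 0) = 0"
  unfolding enorm_def by simp

lemma enorm_scaleR: "enorm n (\<lambda>i. t * h i) = \<bar>t\<bar> * enorm n h"
proof -
  have "(\<Sum>i<n. (t * h i)\<^sup>2) = t\<^sup>2 * (\<Sum>i<n. (h i)\<^sup>2)"
    by (simp add: sum_distrib_left power_mult_distrib)
  then show ?thesis unfolding enorm_def by (simp add: real_sqrt_mult)
qed

lemma enorm_line_point_diff: "enorm n (\<lambda>i. line_point n y h t i - y i) = \<bar>t\<bar> * enorm n h"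
  by (subst enorm_cong[where g="\<lambda>i. t * h i"]) (simp_all add: line_point_apply enorm_scaleR)

lemma abs_le_enorm: "j < n \<Longrightarrow> \<bar>h j\<bar> \<le> enorm n h"
  using member_le_sum[of j "{..<n}" "\<lambda>i. (h i)\<^sup>2"]
  by (simp add: enorm_def real_le_rsqrt)

lemma sum_mult_unit_vec: "j < n \<Longrightarrow> (\<Sum>i<n. G i * unit_vec j i) = G j"
  unfolding unit_vec_def by (simp add: if_distrib cong: if_cong)

lemma enorm_unit_vec: "j < n \<Longrightarrow> enorm n (unit_vec j) = 1"
proof -
  have "(\<Sum>i<n. (unit_vec j i)\<^sup>2) = (\<Sum>i<n. 1 * unit_vec j i)"
    by (intro sum.cong) (auto simp: unit_vec_def)
  then show "j < n \<Longrightarrow> ?thesis"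
    unfolding enorm_def using sum_mult_unit_vec[of j n "\<lambda>_. 1"] by simp
qed

lemma enorm_line_point_unit_vec:
  "j < n \<Longrightarrow> enorm n (\<lambda>i. line_point n y (unit_vec j) t i - y i) = \<bar>t\<bar>"
  by (simp add: enorm_line_point_diff enorm_unit_vec)

lemma has_gradient_at_imp_line_derivative:
  assumes g: "has_gradient_at n g y G" and y: "y \<in> space (Rn n)"
  shows "((\<lambda>t. g (line_point n y h t)) has_real_derivative (\<Sum>i<n. G i * h i)) (at 0)"
proof -
  let ?D = "\<Sum>i<n. G i * h i"
  let ?c = "enorm n h + 1"
  have c: "0 < ?c" using enorm_nonneg[of n h] by linarith
  have "((\<lambda>t. (g (line_point n y h t) - g (line_point n y h 0)) / (t - 0)) \<longlongrightarrow> ?D) (at 0)"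
  proof (rule LIM_I)
    fix r :: real assume r: "0 < r"
    have e: "0 < r / (2 * ?c)" using r c by simp
    obtain d where d: "d > 0" and dd: "\<And>v. v \<in> space (Rn n) \<Longrightarrow> enorm n (\<lambda>i. v i - y i) < d \<Longrightarrow>
       \<bar>g v - g y - (\<Sum>i<n. G i * (v i - y i))\<bar> \<le> r / (2 * ?c) * enorm n (\<lambda>i. v i - y i)"
      using g e unfolding has_gradient_at_def by blast
    show "\<exists>s>0. \<forall>t. t \<noteq> 0 \<and> norm (t - 0) < s \<longrightarrow>
        norm ((g (line_point n y h t) - g (line_point n y h 0)) / (t - 0) - ?D) < r"
    proof (intro exI[of _ "d / ?c"] conjI allI impI)
      show "0 < d / ?c" using d c by simp
      fix t :: real assume t: "t \<noteq> 0 \<and> norm (t - 0) < d / ?c"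
      have "\<bar>t\<bar> * enorm n h \<le> \<bar>t\<bar> * ?c" by (simp add: mult_left_mono)
      also have "\<dots> < d" using t c by (simp add: pos_less_divide_eq)
      finally have near: "enorm n (\<lambda>i. line_point n y h t i - y i) < d"
        by (simp add: enorm_line_point_diff)
      have "(\<Sum>i<n. G i * (line_point n y h t i - y i)) = t * ?D"
        by (simp add: line_point_apply sum_distrib_left algebra_simps)
      then have "\<bar>g (line_point n y h t) - g y - t * ?D\<bar> \<le> r / (2 * ?c) * (\<bar>t\<bar> * enorm n h)"
        using dd[OF line_point_in_space near] by (simp add: enorm_line_point_diff)
      also have "\<dots> \<le> r / (2 * ?c) * (\<bar>t\<bar> * ?c)"
        using e by (intro mult_left_mono) auto
      also have "\<dots> = r / 2 * \<bar>t\<bar>" using c by (simp add: field_simps)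
      also have "\<dots> < r * \<bar>t\<bar>" using r t by simp
      finally have "\<bar>g (line_point n y h t) - g y - t * ?D\<bar> / \<bar>t\<bar> < r"
        using t by (simp add: divide_less_eq)
      moreover have "(g (line_point n y h t) - g (line_point n y h 0)) / (t - 0) - ?D
          = (g (line_point n y h t) - g y - t * ?D) / t"
        using t by (simp add: line_point_0[OF y] field_simps)
      ultimately show "norm ((g (line_point n y h t) - g (line_point n y h 0)) / (t - 0) - ?D) < r"
        by (simp add: abs_divide)
    qed
  qed
  then show ?thesis by (simp add: has_field_derivative_iff)
qed

lemma has_gradient_at_imp_partial_derivative:
  assumes "has_gradient_at n g y G" "y \<in> space (Rn n)" "j < n"
  shows "((\<lambda>t. g (line_point n y (unit_vec j) t)) has_real_derivative G j) (at 0)"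
  using has_gradient_at_imp_line_derivative[OF assms(1,2), of "unit_vec j"]
  by (simp add: sum_mult_unit_vec[OF assms(3)])

lemma partial_eq_gradient:
  assumes "has_gradient_at n g v G" "v \<in> space (Rn n)" "j < n"
  shows "partial j g v = G j"
  using has_gradient_at_imp_partial_derivative[OF assms] fun_upd_eq_line_point[OF assms(2,3)]
  unfolding partial_def by (simp add: DERIV_imp_deriv)

lemma gradient_eq_zero_at_local_min:
  assumes g: "has_gradient_at n g x G" and x: "x \<in> space (Rn n)" and j: "j < n"
    and d: "d > 0" and min: "\<And>v. v \<in> space (Rn n) \<Longrightarrow> enorm n (\<lambda>i. v i - x i) < d \<Longrightarrow> g x \<le> g v"
  shows "G j = 0"
proof (rule DERIV_local_min[OF has_gradient_at_imp_partial_derivative[OF g x j] d], intro allI impI)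
  fix t :: real assume "\<bar>0 - t\<bar> < d"
  then show "g (line_point n x (unit_vec j) 0) \<le> g (line_point n x (unit_vec j) t)"
    using min[OF line_point_in_space] by (simp add: enorm_line_point_unit_vec[OF j] line_point_0[OF x])
qed

lemma second_partial_eq_gradient:
  assumes x: "x \<in> space (Rn n)" and d: "d > 0"
    and G: "\<And>v. v \<in> space (Rn n) \<Longrightarrow> enorm n (\<lambda>i. v i - x i) < d \<Longrightarrow> has_gradient_at n g v (G v)"
    and H: "has_gradient_at n (\<lambda>v. G v j) x H" and i: "i < n" and j: "j < n"
  shows "partial i (partial j g) x = H i"
proof -
  have "eventually (\<lambda>t. partial j g (line_point n x (unit_vec i) t)
      = G (line_point n x (unit_vec i) t) j) (nhds 0)"
    unfolding eventually_nhds_metric using d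
    by (intro exI[of _ d]) (auto intro!: partial_eq_gradient[OF G line_point_in_space j]
        line_point_in_space simp: enorm_line_point_unit_vec[OF i] dist_real_def)
  then have "((\<lambda>t. partial j g (line_point n x (unit_vec i) t)) has_real_derivative H i) (at 0)"
    using has_gradient_at_imp_partial_derivative[OF H x i] by (simp add: DERIV_cong_ev)
  then show ?thesis
    unfolding partial_def[of i] fun_upd_eq_line_point[OF x i] by (simp add: DERIV_imp_deriv)
qed

lemma ex_uniform_radius:
  fixes f :: "'a \<Rightarrow> real" and n :: nat
  assumes "\<forall>j<n. \<exists>d>0. \<forall>v\<in>S. f v < d \<longrightarrow> P j v"
  shows "\<exists>d>0. \<forall>j<n. \<forall>v\<in>S. f v < d \<longrightarrow> P j v"
  using assms
proof (induction n)
  case (Suc n)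
  then obtain d1 where d1: "d1 > 0" "\<forall>j<n. \<forall>v\<in>S. f v < d1 \<longrightarrow> P j v" by auto
  obtain d2 where d2: "d2 > 0" "\<forall>v\<in>S. f v < d2 \<longrightarrow> P n v" using Suc.prems by auto
  show ?case
    using d1 d2 by (intro exI[of _ "min d1 d2"]) (auto simp: less_Suc_eq)
qed (auto intro: exI[of _ 1])

lemma abs_quad_form_le:
  fixes F :: "nat \<Rightarrow> nat \<Rightarrow> real"
  shows "\<bar>\<Sum>i<n. \<Sum>j<n. w i * F i j * w j\<bar> \<le> (\<Sum>i<n. \<Sum>j<n. \<bar>F i j\<bar>) * (\<Sum>i<n. (w i)\<^sup>2)"
proof -
  let ?S = "\<Sum>i<n. (w i)\<^sup>2"
  have "\<bar>\<Sum>i<n. \<Sum>j<n. w i * F i j * w j\<bar> \<le> (\<Sum>i<n. \<Sum>j<n. \<bar>w i * F i j * w j\<bar>)"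
    by (rule order_trans[OF sum_abs]) (intro sum_mono sum_abs)
  also have "\<dots> \<le> (\<Sum>i<n. \<Sum>j<n. \<bar>F i j\<bar> * ?S)"
  proof (intro sum_mono)
    fix i j assume "i \<in> {..<n}" "j \<in> {..<n}"
    then have "(w i)\<^sup>2 \<le> ?S" "(w j)\<^sup>2 \<le> ?S" by (auto intro: member_le_sum)
    moreover have "2 * \<bar>w i * w j\<bar> \<le> (w i)\<^sup>2 + (w j)\<^sup>2"
      using sum_squares_bound[of "\<bar>w i\<bar>" "\<bar>w j\<bar>"] by (simp add: abs_mult power2_eq_square)
    ultimately have "\<bar>w i * w j\<bar> \<le> ?S" by simp
    then have "\<bar>F i j\<bar> * \<bar>w i * w j\<bar> \<le> \<bar>F i j\<bar> * ?S" by (rule mult_left_mono) simp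
    then show "\<bar>w i * F i j * w j\<bar> \<le> \<bar>F i j\<bar> * ?S" by (simp add: abs_mult ac_simps)
  qed
  also have "\<dots> = (\<Sum>i<n. \<Sum>j<n. \<bar>F i j\<bar>) * ?S" by (simp add: sum_distrib_right)
  finally show ?thesis .
qed

lemma quad_form_le_quad_norm:
  fixes F :: "nat \<Rightarrow> nat \<Rightarrow> real"
  shows "(\<Sum>i<n. \<Sum>j<n. v i * F i j * v j) \<le> max 0 (quad_norm n F) * (\<Sum>i<n. (v i)\<^sup>2)"
proof (cases "\<exists>i<n. v i \<noteq> 0")
  case True
  let ?w = "restrict v {..<n}"
  let ?S = "\<Sum>i<n. (v i)\<^sup>2"
  let ?C = "\<Sum>i<n. \<Sum>j<n. \<bar>F i j\<bar>"
  let ?A = "{(\<Sum>i<n. \<Sum>j<n. w i * F i j * w j) / (\<Sum>i<n. (w i)\<^sup>2) | w.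
              w \<in> space (Rn n) \<and> (\<exists>i<n. w i \<noteq> 0)}"
  obtain i0 where "i0 < n" "v i0 \<noteq> 0" using True by blast
  then have S: "0 < ?S" by (intro sum_pos2[of _ i0]) auto
  have "bdd_above ?A"
  proof (rule bdd_aboveI[of _ ?C])
    fix y assume "y \<in> ?A"
    then obtain w where y: "y = (\<Sum>i<n. \<Sum>j<n. w i * F i j * w j) / (\<Sum>i<n. (w i)\<^sup>2)" by blast
    have "y \<le> \<bar>\<Sum>i<n. \<Sum>j<n. w i * F i j * w j\<bar> / (\<Sum>i<n. (w i)\<^sup>2)"
      unfolding y by (intro divide_right_mono) (auto intro: sum_nonneg)
    also have "\<dots> \<le> ?C"
    proof (cases "(\<Sum>i<n. (w i)\<^sup>2) = 0")
      case False
      moreover have "0 \<le> (\<Sum>i<n. (w i)\<^sup>2)" by (simp add: sum_nonneg)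
      ultimately have "0 < (\<Sum>i<n. (w i)\<^sup>2)" by linarith
      then show ?thesis using abs_quad_form_le[where n=n and w=w and F=F] by (simp add: pos_divide_le_eq)
    next
      case True
      then show ?thesis by (simp add: sum_nonneg)
    qed
    finally show "y \<le> ?C" .
  qed
  moreover have "(\<Sum>i<n. \<Sum>j<n. v i * F i j * v j) / ?S \<in> ?A"
  proof -
    have "(\<Sum>i<n. \<Sum>j<n. v i * F i j * v j) / ?S
        = (\<Sum>i<n. \<Sum>j<n. ?w i * F i j * ?w j) / (\<Sum>i<n. (?w i)\<^sup>2)"
      by (intro arg_cong2[where f="(/)"] sum.cong) auto
    moreover have "?w \<in> space (Rn n)" "\<exists>i<n. ?w i \<noteq> 0" using True by (auto simp: space_Rn)
    ultimately show ?thesis by blast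
  qed
  ultimately have "(\<Sum>i<n. \<Sum>j<n. v i * F i j * v j) / ?S \<le> quad_norm n F"
    unfolding quad_norm_def by (rule cSup_upper[rotated])
  then have "(\<Sum>i<n. \<Sum>j<n. v i * F i j * v j) \<le> quad_norm n F * ?S"
    using S by (simp add: divide_le_eq)
  also have "\<dots> \<le> max 0 (quad_norm n F) * ?S" using S by (intro mult_right_mono) auto
  finally show ?thesis .
qed simp

lemma mean_value_along_line:
  assumes x: "x \<in> space (Rn n)" and v: "v \<in> space (Rn n)"
    and grad: "\<And>s. 0 \<le> s \<Longrightarrow> s \<le> 1 \<Longrightarrow>
      has_gradient_at n g (line_point n x (\<lambda>i. v i - x i) s) (G (line_point n x (\<lambda>i. v i - x i) s))"
  obtains \<xi> where "0 < \<xi>" "\<xi> < 1"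
    "g v - g x = (\<Sum>j<n. G (line_point n x (\<lambda>i. v i - x i) \<xi>) j * (v j - x j))"
proof -
  define h where "h i = v i - x i" for i
  define \<phi> where "\<phi> s = g (line_point n x h s)" for s
  define \<phi>' where "\<phi>' s = (\<Sum>j<n. G (line_point n x h s) j * h j)" for s
  have "(\<phi> has_real_derivative \<phi>' s) (at s)" if "0 \<le> s" "s \<le> 1" for s
  proof -
    let ?y = "line_point n x h s"
    have "((\<lambda>t. g (line_point n ?y h t)) has_real_derivative \<phi>' s) (at 0)"
      unfolding \<phi>'_def using grad[OF that] unfolding h_def[symmetric]
      by (rule has_gradient_at_imp_line_derivative[OF _ line_point_in_space])
    then have "((\<lambda>t. \<phi> (t + s)) has_real_derivative \<phi>' s) (at 0)"
      unfolding \<phi>_def line_point_line_point .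
    then show ?thesis using DERIV_shift[of \<phi> "\<phi>' s" 0 s] by simp
  qed
  then obtain \<xi> where "0 < \<xi>" "\<xi> < 1" "\<phi> 1 - \<phi> 0 = (1 - 0) * \<phi>' \<xi>"
    using MVT2[of 0 1 \<phi> \<phi>'] by auto
  moreover have "\<phi> 1 = g v" "\<phi> 0 = g x"
    unfolding \<phi>_def h_def using line_point_1[OF v] line_point_0[OF x] by simp_all
  ultimately show ?thesis using that unfolding \<phi>'_def h_def by simp
qed

lemma sum_mult_le_quad_norm_of_near_linear:
  fixes D h :: "nat \<Rightarrow> real" and F :: "nat \<Rightarrow> nat \<Rightarrow> real"
  assumes \<xi>: "0 \<le> \<xi>" "\<xi> \<le> 1" and e: "0 \<le> e" "real n * e \<le> 1"
    and near: "\<And>j. j < n \<Longrightarrow> \<bar>D j - \<xi> * (\<Sum>i<n. F i j * h i)\<bar> \<le> e * enorm n h"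
  shows "(\<Sum>j<n. D j * h j) \<le> (max 0 (quad_norm n F) + 1) * (enorm n h)\<^sup>2"
proof -
  define r where "r = enorm n h"
  define q where "q = (\<Sum>i<n. \<Sum>j<n. h i * F i j * h j)"
  define \<rho> where "\<rho> j = D j - \<xi> * (\<Sum>i<n. F i j * h i)" for j
  have r0: "0 \<le> r" unfolding r_def by (rule enorm_nonneg)
  have "(\<Sum>j<n. D j * h j) = \<xi> * q + (\<Sum>j<n. \<rho> j * h j)"
  proof -
    have "(\<Sum>j<n. \<xi> * (\<Sum>i<n. F i j * h i) * h j) = \<xi> * q"
      unfolding q_def by (subst sum.swap) (simp add: sum_distrib_left sum_distrib_right ac_simps)
    moreover have "(\<Sum>j<n. \<rho> j * h j) = (\<Sum>j<n. D j * h j) - (\<Sum>j<n. \<xi> * (\<Sum>i<n. F i j * h i) * h j)"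
      unfolding \<rho>_def by (simp add: left_diff_distrib sum_subtractf)
    ultimately show ?thesis by linarith
  qed
  also have "\<xi> * q \<le> max 0 (quad_norm n F) * r\<^sup>2"
  proof -
    have "\<xi> * q \<le> max 0 q"
      using \<xi> by (cases "q \<le> 0") (simp_all add: mult_nonneg_nonpos mult_left_le_one_le)
    moreover have "q \<le> max 0 (quad_norm n F) * r\<^sup>2"
      unfolding q_def r_def enorm_power2 by (rule quad_form_le_quad_norm)
    moreover have "0 \<le> max 0 (quad_norm n F) * r\<^sup>2" by simp
    ultimately show ?thesis by linarith
  qed
  also have "(\<Sum>j<n. \<rho> j * h j) \<le> (\<Sum>j<n. (e * r) * r)"
  proof (rule sum_mono)
    fix j assume "j \<in> {..<n}"
    then have "\<bar>\<rho> j\<bar> * \<bar>h j\<bar> \<le> (e * r) * r"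
      using near abs_le_enorm[of j n h] r0 e unfolding \<rho>_def r_def by (intro mult_mono) auto
    then show "\<rho> j * h j \<le> (e * r) * r"
      using abs_ge_self[of "\<rho> j * h j"] unfolding abs_mult by linarith
  qed
  also have "(\<Sum>j<n. (e * r) * r) \<le> r\<^sup>2"
    using e mult_right_mono[OF e(2), of "r * r"] by (simp add: power2_eq_square ac_simps)
  finally show ?thesis unfolding r_def by (simp add: algebra_simps)
qed

text \<open>At a local minimum with value 0 the gradient vanishes, so by the mean value theorem
  \<open>g v\<close> is the gradient at an intermediate point applied to \<open>v - x\<close>; expanding that gradient
  to first order leaves the Hessian quadratic form plus a remainder of size \<open>o(\<bar>v - x\<bar>\<^sup>2)\<close>.\<close>
lemma local_quadratic_upper_bound:
  assumes x: "x \<in> space (Rn n)" and td: "twice_differentiable_at n g x" and g0: "g x = 0"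
    and dn: "dn > 0" and nn: "\<And>v. v \<in> space (Rn n) \<Longrightarrow> enorm n (\<lambda>i. v i - x i) < dn \<Longrightarrow> 0 \<le> g v"
  shows "\<exists>d>0. \<forall>v\<in>space (Rn n). enorm n (\<lambda>i. v i - x i) < d \<longrightarrow>
     g v \<le> (max 0 (quad_norm n (\<lambda>i j. partial i (partial j g) x)) + 1) * (enorm n (\<lambda>i. v i - x i))\<^sup>2"
proof -
  obtain G d0 where d0: "d0 > 0"
    and G: "\<And>v. v \<in> space (Rn n) \<Longrightarrow> enorm n (\<lambda>i. v i - x i) < d0 \<Longrightarrow> has_gradient_at n g v (G v)"
    and "\<forall>j<n. \<exists>H. has_gradient_at n (\<lambda>v. G v j) x H"
    using td unfolding twice_differentiable_at_def by blast
  then have "\<forall>j. \<exists>H. j < n \<longrightarrow> has_gradient_at n (\<lambda>v. G v j) x H" by blast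
  then obtain H where H: "\<And>j. j < n \<Longrightarrow> has_gradient_at n (\<lambda>v. G v j) x (H j)"
    by (metis choice)
  have Gx: "has_gradient_at n g x (G x)" using G[OF x] d0 by (simp add: enorm_zero)
  have Gx0: "G x j = 0" if "j < n" for j
    by (rule gradient_eq_zero_at_local_min[OF Gx x that dn]) (use g0 nn in auto)
  have Hess: "partial i (partial j g) x = H j i" if "i < n" "j < n" for i j
    by (rule second_partial_eq_gradient[OF x d0 G H]) (use that in auto)
  define e :: real where "e = 1 / (real n + 1)"
  have e: "0 < e" "real n * e \<le> 1" unfolding e_def by (simp_all add: field_simps)
  have "\<forall>j<n. \<exists>d>0. \<forall>v\<in>space (Rn n). enorm n (\<lambda>i. v i - x i) < d \<longrightarrow>
      \<bar>G v j - G x j - (\<Sum>i<n. H j i * (v i - x i))\<bar> \<le> e * enorm n (\<lambda>i. v i - x i)"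
    using H e unfolding has_gradient_at_def by blast
  from ex_uniform_radius[OF this] obtain d1 where d1: "d1 > 0"
    and rem: "\<And>j v. j < n \<Longrightarrow> v \<in> space (Rn n) \<Longrightarrow> enorm n (\<lambda>i. v i - x i) < d1 \<Longrightarrow>
      \<bar>G v j - G x j - (\<Sum>i<n. H j i * (v i - x i))\<bar> \<le> e * enorm n (\<lambda>i. v i - x i)"
    by blast
  show ?thesis
  proof (intro exI[of _ "min d0 d1"] conjI ballI impI)
    show "0 < min d0 d1" using d0 d1 by simp
    fix v assume v: "v \<in> space (Rn n)" and vd: "enorm n (\<lambda>i. v i - x i) < min d0 d1"
    define h where "h i = v i - x i" for i
    define r where "r = enorm n h"
    have r0: "0 \<le> r" unfolding r_def by (rule enorm_nonneg)
    let ?y = "\<lambda>s. line_point n x h s"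
    have "r < min d0 d1" using vd unfolding r_def h_def[abs_def] .
    then have near: "enorm n (\<lambda>i. ?y s i - x i) < min d0 d1" if "0 \<le> s" "s \<le> 1" for s
      using that r0 mult_left_le_one_le[of r s] by (simp add: enorm_line_point_diff flip: r_def)
    have grad: "has_gradient_at n g (?y s) (G (?y s))" if "0 \<le> s" "s \<le> 1" for s
      by (rule G[OF line_point_in_space]) (use near[OF that] in simp)
    obtain \<xi> where \<xi>: "0 < \<xi>" "\<xi> < 1" and mvt: "g v - g x = (\<Sum>j<n. G (?y \<xi>) j * h j)"
      using mean_value_along_line[OF x v, of g G, folded h_def[abs_def], OF grad]
      unfolding h_def by blast
    have "\<bar>G (?y \<xi>) j - \<xi> * (\<Sum>i<n. partial i (partial j g) x * h i)\<bar> \<le> e * enorm n h"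
      if j: "j < n" for j
    proof -
      have "(\<Sum>i<n. H j i * (?y \<xi> i - x i)) = \<xi> * (\<Sum>i<n. partial i (partial j g) x * h i)"
        using Hess j by (simp add: line_point_apply sum_distrib_left algebra_simps)
      then have "\<bar>G (?y \<xi>) j - \<xi> * (\<Sum>i<n. partial i (partial j g) x * h i)\<bar> \<le> e * (\<xi> * r)"
        using rem[OF j line_point_in_space[of n x h \<xi>]] near[of \<xi>] \<xi> Gx0[OF j]
        unfolding r_def by (simp add: enorm_line_point_diff)
      also have "\<dots> \<le> e * enorm n h" using \<xi> e r0 unfolding r_def by (simp add: mult_left_le_one_le)
      finally show ?thesis .
    qed
    from sum_mult_le_quad_norm_of_near_linear[OF _ _ _ e(2) this] \<xi> e(1)
    show "g v \<le> (max 0 (quad_norm n (\<lambda>i j. partial i (partial j g) x)) + 1) * (enorm n (\<lambda>i. v i - x i))\<^sup>2"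
      using mvt g0 unfolding h_def[abs_def] by simp
  qed
qed

section \<open>Lipschitz continuity of the channel\<close>

lemma lipschitz_on_interval_of_local:
  fixes \<phi> :: "real \<Rightarrow> real"
  assumes L: "0 \<le> L"
    and loc: "\<And>s. s \<in> {a..b} \<Longrightarrow> \<exists>d>0. \<forall>t\<in>{a..b}. \<bar>t - s\<bar> < d \<longrightarrow> \<bar>\<phi> t - \<phi> s\<bar> \<le> L * \<bar>t - s\<bar>"
  shows "L-lipschitz_on {a..b} \<phi>"
proof (rule locally_lipschitz_imp_lipschitz[OF _ _ L])
  show "continuous_on {a..b} \<phi>"
    unfolding continuous_on_iff
  proof (intro ballI allI impI)
    fix s e :: real assume s: "s \<in> {a..b}" and e: "0 < e"
    obtain d where d: "d > 0" "\<forall>t\<in>{a..b}. \<bar>t - s\<bar> < d \<longrightarrow> \<bar>\<phi> t - \<phi> s\<bar> \<le> L * \<bar>t - s\<bar>"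
      using loc[OF s] by blast
    show "\<exists>d>0. \<forall>t\<in>{a..b}. dist t s < d \<longrightarrow> dist (\<phi> t) (\<phi> s) < e"
    proof (intro exI[of _ "min d (e / (L + 1))"] conjI ballI impI)
      show "0 < min d (e / (L + 1))" using d e L by simp
      fix t assume t: "t \<in> {a..b}" "dist t s < min d (e / (L + 1))"
      then have "\<bar>\<phi> t - \<phi> s\<bar> \<le> L * \<bar>t - s\<bar>" using d by (simp add: dist_real_def)
      also have "\<dots> \<le> (L + 1) * \<bar>t - s\<bar>" by (simp add: mult_right_mono)
      also have "\<dots> < e" using t L by (simp add: dist_real_def pos_less_divide_eq mult.commute)
      finally show "dist (\<phi> t) (\<phi> s) < e" by (simp add: dist_real_def)
    qed
  qed
next
  fix x y assume x: "x \<in> {a..<b}" and y: "x < y"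
  obtain d where d: "d > 0" "\<forall>t\<in>{a..b}. \<bar>t - x\<bar> < d \<longrightarrow> \<bar>\<phi> t - \<phi> x\<bar> \<le> L * \<bar>t - x\<bar>"
    using loc[of x] x by auto
  define z where "z = min (min y b) (x + d / 2)"
  have z: "z \<in> {x<..y}" "z \<in> {a..b}" "\<bar>z - x\<bar> < d" using x y d unfolding z_def by auto
  then have "\<bar>\<phi> z - \<phi> x\<bar> \<le> L * \<bar>z - x\<bar>" using d(2) by blast
  then show "\<exists>z\<in>{x<..y}. dist (\<phi> z) (\<phi> x) \<le> L * (z - x)"
    using z by (intro bexI[of _ z]) (auto simp: dist_real_def)
qed

lemma line_point_in_cube:
  assumes x: "x \<in> cube n a l" and v: "v \<in> cube n a l" and s: "0 \<le> s" "s \<le> 1"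
  shows "line_point n x (\<lambda>i. v i - x i) s \<in> cube n a l"
proof -
  have "a i \<le> x i + s * (v i - x i) \<and> x i + s * (v i - x i) \<le> a i + l" if i: "i < n" for i
  proof -
    have "x i + s * (v i - x i) = (1 - s) * x i + s * v i" by (simp add: algebra_simps)
    moreover have "(1 - s) * a i + s * a i \<le> (1 - s) * x i + s * v i"
      "(1 - s) * x i + s * v i \<le> (1 - s) * (a i + l) + s * (a i + l)"
      using x v i s unfolding cube_def by (auto intro!: add_mono mult_left_mono)
    ultimately show ?thesis by (simp add: algebra_simps)
  qed
  then show ?thesis unfolding cube_def using line_point_in_space by (auto simp: line_point_apply)
qed

lemma lipschitz_on_cube_of_local:
  fixes f :: "(nat \<Rightarrow> real) \<Rightarrow> real"
  assumes L: "0 \<le> L"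
    and loc: "\<And>y. y \<in> cube n a l \<Longrightarrow> \<exists>d>0. \<forall>v\<in>space (Rn n). enorm n (\<lambda>i. v i - y i) < d \<longrightarrow>
        \<bar>f v - f y\<bar> \<le> L * enorm n (\<lambda>i. v i - y i)"
    and x: "x \<in> cube n a l" and v: "v \<in> cube n a l"
  shows "\<bar>f v - f x\<bar> \<le> L * enorm n (\<lambda>i. v i - x i)"
proof -
  define h where "h i = v i - x i" for i
  define \<phi> where "\<phi> s = f (line_point n x h s)" for s
  have hn: "0 \<le> enorm n h" by (rule enorm_nonneg)
  have "(L * enorm n h)-lipschitz_on {0..1} \<phi>"
  proof (rule lipschitz_on_interval_of_local)
    show "0 \<le> L * enorm n h" using L hn by simp
    fix s :: real assume s: "s \<in> {0..1}"
    let ?y = "line_point n x h s"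
    have "?y \<in> cube n a l" unfolding h_def using line_point_in_cube[OF x v] s by auto
    then obtain d where d: "d > 0" and dd: "\<And>w. w \<in> space (Rn n) \<Longrightarrow> enorm n (\<lambda>i. w i - ?y i) < d \<Longrightarrow>
        \<bar>f w - f ?y\<bar> \<le> L * enorm n (\<lambda>i. w i - ?y i)" using loc by blast
    show "\<exists>d>0. \<forall>t\<in>{0..1}. \<bar>t - s\<bar> < d \<longrightarrow> \<bar>\<phi> t - \<phi> s\<bar> \<le> L * enorm n h * \<bar>t - s\<bar>"
    proof (intro exI[of _ "d / (enorm n h + 1)"] conjI ballI impI)
      show "0 < d / (enorm n h + 1)" using d hn by simp
      fix t assume t: "t \<in> {0..1}" "\<bar>t - s\<bar> < d / (enorm n h + 1)"
      have "\<bar>t - s\<bar> * enorm n h \<le> \<bar>t - s\<bar> * (enorm n h + 1)" by (simp add: mult_left_mono)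
      also have "\<dots> < d" using t(2) hn by (simp add: pos_less_divide_eq)
      finally have "enorm n (\<lambda>i. line_point n ?y h (t - s) i - ?y i) < d"
        by (simp add: enorm_line_point_diff)
      from dd[OF line_point_in_space this]
      have "\<bar>f (line_point n ?y h (t - s)) - f ?y\<bar> \<le> L * (\<bar>t - s\<bar> * enorm n h)"
        by (simp add: enorm_line_point_diff)
      moreover have "line_point n ?y h (t - s) = line_point n x h t"
        by (simp add: line_point_line_point)
      ultimately show "\<bar>\<phi> t - \<phi> s\<bar> \<le> L * enorm n h * \<bar>t - s\<bar>"
        unfolding \<phi>_def by (simp add: ac_simps)
    qed
  qed
  then have "\<bar>\<phi> 1 - \<phi> 0\<bar> \<le> L * enorm n h"
    using lipschitz_onD[of "L * enorm n h" "{0..1}" \<phi> 1 0] by (simp add: dist_real_def)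
  moreover have "\<phi> 1 = f v" "\<phi> 0 = f x"
    using x v unfolding \<phi>_def h_def cube_def by (simp_all add: line_point_1 line_point_0)
  ultimately show ?thesis unfolding h_def by simp
qed

lemma general_channel_prob_space:
  assumes "general_channel Y W" "x \<in> space (Rn n)"
  shows "prob_space (W n x)" "sets (W n x) = sets (Yn Y n)"
proof -
  have "W n \<in> Rn n \<rightarrow>\<^sub>M prob_algebra (Yn Y n)" using assms(1) unfolding general_channel_def ..
  then have "W n x \<in> space (prob_algebra (Yn Y n))" using assms(2) by (rule measurable_space)
  then show "prob_space (W n x)" "sets (W n x) = sets (Yn Y n)" by (auto simp: space_prob_algebra)
qed

lemma general_channel_bind:
  assumes gc: "general_channel Y W" and Q: "prob_space Q" "sets Q = sets (Rn n)"
  shows "prob_space (Q \<bind> W n)" "sets (Q \<bind> W n) = sets (Yn Y n)"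
    "space (Q \<bind> W n) = space (Yn Y n)"
    "\<And>B. B \<in> sets (Yn Y n) \<Longrightarrow> measure (Q \<bind> W n) B = QW W n Q B"
proof -
  have W: "W n \<in> Rn n \<rightarrow>\<^sub>M prob_algebra (Yn Y n)" using gc unfolding general_channel_def ..
  have Q': "Q \<in> space (prob_algebra (Rn n))" using Q by (simp add: space_prob_algebra)
  show "prob_space (Q \<bind> W n)" by (rule prob_space_bind'[OF Q' W])
  show s: "sets (Q \<bind> W n) = sets (Yn Y n)" by (rule sets_bind'[OF Q' W])
  then show "space (Q \<bind> W n) = space (Yn Y n)" by (rule sets_eq_imp_space_eq)
  interpret prob_space Q by fact
  have "W n \<in> Q \<rightarrow>\<^sub>M subprob_algebra (Yn Y n)"
    using measurable_prob_algebraD[OF W] by (simp add: measurable_cong_sets[OF Q(2) refl])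
  then show "measure (Q \<bind> W n) B = QW W n Q B" if "B \<in> sets (Yn Y n)" for B
    unfolding QW_def by (rule subprob_space.measure_bind[OF subprob_space_axioms _ that])
qed

text \<open>Locally, the KL divergence is at most quadratic in the displacement (it vanishes to first
  order at its minimum \<open>v = y\<close>), and the event probabilities differ by at most twice its
  square root.\<close>
lemma measure_channel_locally_lipschitz:
  assumes gc: "general_channel Y W" and y: "y \<in> space (Rn n)"
    and fin: "\<exists>d>0. \<forall>v\<in>space (Rn n). enorm n (\<lambda>i. v i - y i) < d \<longrightarrow> KLW_finite W n y v"
    and td: "twice_differentiable_at n (KLW W n y) y"
    and F: "quad_norm n (Fmat W n y) \<le> Bq" and Bq: "0 \<le> Bq"
    and B: "B \<in> sets (Yn Y n)"
  shows "\<exists>d>0. \<forall>v\<in>space (Rn n). enorm n (\<lambda>i. v i - y i) < d \<longrightarrow>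
     \<bar>measure (W n v) B - measure (W n y) B\<bar> \<le> 2 * sqrt (Bq + 1) * enorm n (\<lambda>i. v i - y i)"
proof -
  obtain d1 where d1: "d1 > 0"
    and fd: "\<And>v. v \<in> space (Rn n) \<Longrightarrow> enorm n (\<lambda>i. v i - y i) < d1 \<Longrightarrow> KLW_finite W n y v"
    using fin by blast
  note Wy = general_channel_prob_space[OF gc y]
  have KL: "0 \<le> KLW W n y v \<and> \<bar>measure (W n v) B - measure (W n y) B\<bar> \<le> 2 * sqrt (KLW W n y v)"
    if "v \<in> space (Rn n)" "enorm n (\<lambda>i. v i - y i) < d1" for v
  proof -
    note Wv = general_channel_prob_space[OF gc that(1)]
    have ac: "absolutely_continuous (W n y) (W n v)"
      and int: "integrable (W n v) (entropy_density (exp 1) (W n y) (W n v))"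
      using fd[OF that] unfolding KLW_finite_def by auto
    have s: "sets (W n v) = sets (W n y)" and B': "B \<in> sets (W n y)" using Wv Wy B by auto
    show ?thesis unfolding KLW_def
      using KL_divergence_nonneg_of_integrable[OF Wy(1) Wv(1) ac s int]
        abs_measure_diff_le_sqrt_KL[OF Wy(1) Wv(1) ac s int B'] ..
  qed
  have "KLW W n y y = 0"
  proof -
    interpret prob_space "W n y" by (rule Wy(1))
    show ?thesis unfolding KLW_def by (rule KL_same_eq_0)
  qed
  then obtain d2 where d2: "d2 > 0" and quad: "\<And>v. v \<in> space (Rn n) \<Longrightarrow> enorm n (\<lambda>i. v i - y i) < d2 \<Longrightarrow>
     KLW W n y v \<le> (max 0 (quad_norm n (Fmat W n y)) + 1) * (enorm n (\<lambda>i. v i - y i))\<^sup>2"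
    using local_quadratic_upper_bound[OF y td _ d1] KL unfolding Fmat_def by blast
  show ?thesis
  proof (intro exI[of _ "min d1 d2"] conjI ballI impI)
    show "0 < min d1 d2" using d1 d2 by simp
    fix v assume v: "v \<in> space (Rn n)" and vd: "enorm n (\<lambda>i. v i - y i) < min d1 d2"
    let ?r = "enorm n (\<lambda>i. v i - y i)"
    have "(max 0 (quad_norm n (Fmat W n y)) + 1) * ?r\<^sup>2 \<le> (Bq + 1) * ?r\<^sup>2"
      using F Bq by (intro mult_right_mono) auto
    then have "KLW W n y v \<le> (Bq + 1) * ?r\<^sup>2" using quad[OF v] vd by simp
    then have "2 * sqrt (KLW W n y v) \<le> 2 * sqrt ((Bq + 1) * ?r\<^sup>2)" by simp
    also have "\<dots> = 2 * sqrt (Bq + 1) * ?r" by (simp add: real_sqrt_mult enorm_nonneg)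
    finally show "\<bar>measure (W n v) B - measure (W n y) B\<bar> \<le> 2 * sqrt (Bq + 1) * ?r"
      using KL[OF v] vd by linarith
  qed
qed

lemma measure_channel_lipschitz_on_cube:
  assumes gc: "general_channel Y W"
    and A2: "\<And>y. y \<in> cube n a l \<Longrightarrow>
      (\<exists>d>0. \<forall>v\<in>space (Rn n). enorm n (\<lambda>i. v i - y i) < d \<longrightarrow> KLW_finite W n y v) \<and>
      twice_differentiable_at n (KLW W n y) y"
    and F: "\<And>y. y \<in> cube n a l \<Longrightarrow> quad_norm n (Fmat W n y) \<le> Bq" and Bq: "0 \<le> Bq"
    and B: "B \<in> sets (Yn Y n)" and x: "x \<in> cube n a l" and v: "v \<in> cube n a l"
  shows "\<bar>measure (W n v) B - measure (W n x) B\<bar> \<le> 2 * sqrt (Bq + 1) * enorm n (\<lambda>i. v i - x i)"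
proof (rule lipschitz_on_cube_of_local[OF _ _ x v])
  fix y assume y: "y \<in> cube n a l"
  then have "y \<in> space (Rn n)" unfolding cube_def by blast
  with A2[OF y] show "\<exists>d>0. \<forall>w\<in>space (Rn n). enorm n (\<lambda>i. w i - y i) < d \<longrightarrow>
      \<bar>measure (W n w) B - measure (W n y) B\<bar> \<le> 2 * sqrt (Bq + 1) * enorm n (\<lambda>i. w i - y i)"
    using measure_channel_locally_lipschitz[OF gc _ _ _ F[OF y] Bq B] by blast
qed (use Bq in simp)

section \<open>Approximating codebooks from resolvability\<close>

text \<open>The measurable space of a bind is taken from \<open>f\<close> at an arbitrary point, which may lie
  outside \<open>S\<close>; if that point carries the wrong \<open>\<sigma>\<close>-algebra, the bind is the null measure.\<close>
lemma measure_bind_pmf_of_set_cases: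
  fixes f :: "'a \<Rightarrow> 'b measure"
  assumes S: "finite S" "S \<noteq> {}" and fK: "\<And>m. m \<in> S \<Longrightarrow> f m \<in> space (prob_algebra K)"
  shows "(\<forall>B\<in>sets K. measure (measure_pmf (pmf_of_set S) \<bind> f) B = (\<Sum>m\<in>S. measure (f m) B) / card S)
       \<or> (\<forall>B. measure (measure_pmf (pmf_of_set S) \<bind> f) B = 0)"
proof -
  let ?p = "measure_pmf (pmf_of_set S)"
  define s0 where "s0 = (SOME x. x \<in> space ?p)"
  have bind: "?p \<bind> g = join (distr ?p (subprob_algebra (g s0)) g)" for g :: "'a \<Rightarrow> 'b measure"
    unfolding s0_def by (rule bind_nonempty) simp
  have em: "emeasure ?p X = emeasure ?p (X \<inter> S)" for X
    using emeasure_Int_set_pmf[of "pmf_of_set S" X] S by simp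
  obtain m1 where m1: "m1 \<in> S" using S by blast
  show ?thesis
  proof (cases "sets (f s0) = sets K")
    case True
    define f' where "f' m = (if m \<in> S then f m else f m1)" for m
    have f'K: "f' m \<in> space (prob_algebra K)" for m unfolding f'_def using fK m1 by auto
    then have f'm: "f' \<in> ?p \<rightarrow>\<^sub>M prob_algebra K" by simp
    have "subprob_algebra (f s0) = subprob_algebra (f' s0)"
      using True f'K[of s0] by (intro subprob_algebra_cong) (simp add: space_prob_algebra)
    moreover have "emeasure ?p (f -` A \<inter> space ?p) = emeasure ?p (f' -` A \<inter> space ?p)" for A
    proof -
      have "f -` A \<inter> S = f' -` A \<inter> S" unfolding f'_def by auto
      then show ?thesis using em[of "f -` A"] em[of "f' -` A"] by simp
    qed
    ultimately have "?p \<bind> f = ?p \<bind> f'" unfolding bind distr_def by simp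
    moreover have "measure (?p \<bind> f') B = (\<Sum>m\<in>S. measure (f m) B) / card S" if "B \<in> sets K" for B
    proof -
      have "measure (?p \<bind> f') B = measure_pmf.expectation (pmf_of_set S) (\<lambda>m. measure (f' m) B)"
        by (rule measure_pmf.measure_bind[OF measurable_prob_algebraD[OF f'm] that])
      also have "\<dots> = (\<Sum>m\<in>S. measure (f' m) B) / card S" using S by (simp add: integral_pmf_of_set)
      finally show ?thesis unfolding f'_def by simp
    qed
    ultimately show ?thesis by simp
  next
    case False
    let ?D = "distr ?p (subprob_algebra (f s0)) f"
    have "emeasure ?D X = 0" for X
    proof -
      have "emeasure ?p (f -` X \<inter> space ?p) = 0"
        if "X \<in> sigma_sets (space (subprob_algebra (f s0))) (sets (subprob_algebra (f s0)))" for X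
      proof -
        have "X \<subseteq> space (subprob_algebra (f s0))"
          using that by (metis sets.sigma_sets_eq sets.sets_into_space)
        then have "f -` X \<inter> S = {}"
          using fK False by (auto simp: space_subprob_algebra space_prob_algebra)
        then show ?thesis using em[of "f -` X"] by simp
      qed
      then show ?thesis unfolding distr_def by (simp add: emeasure_measure_of_conv)
    qed
    then have "?D = null_measure ?D" by (intro measure_eqI) simp_all
    then have "(\<integral>\<^sup>+ M'. emeasure M' B \<partial>?D) = 0" for B by (metis nn_integral_null_measure)
    then have "emeasure (?p \<bind> f) B = 0" for B
      unfolding bind join_def by (simp add: emeasure_measure_of_conv)
    then show ?thesis by (simp add: measure_def)
  qed
qed

lemma abs_measure_diff_le_var_dist:
  assumes bdd: "\<And>B. B \<in> sets (Yn Y n) \<Longrightarrow> \<bar>measure P B - measure P' B\<bar> \<le> C"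
    and B: "B \<in> sets (Yn Y n)"
  shows "2 * \<bar>measure P B - measure P' B\<bar> \<le> var_dist Y n P P'"
  unfolding var_dist_def using bdd B by (auto intro!: cSUP_upper bdd_aboveI2)

lemma event_approximation_of_var_dist:
  fixes M :: nat and \<kappa> :: real
  assumes gc: "general_channel Y W" and P: "prob_space P" "sets P = sets (Rn n)"
    and M: "1 \<le> M" and \<phi>: "\<And>m. m \<in> {1..M} \<Longrightarrow> \<phi> m \<in> space (Rn n)"
    and vd: "var_dist Y n (P \<bind> W n) (measure_pmf (pmf_of_set {1..M}) \<bind> (\<lambda>m. W n (\<phi> m))) < 2 * \<kappa>"
    and \<kappa>: "\<kappa> < 1"
  shows "\<forall>B\<in>sets (Yn Y n). \<bar>measure (P \<bind> W n) B - (\<Sum>m\<in>{1..M}. measure (W n (\<phi> m)) B) / M\<bar> \<le> \<kappa>"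
proof -
  let ?P1 = "P \<bind> W n"
  let ?P2 = "measure_pmf (pmf_of_set {1..M}) \<bind> (\<lambda>m. W n (\<phi> m))"
  note P1 = general_channel_bind[OF gc P]
  interpret P1: prob_space ?P1 by (rule P1(1))
  have Wprob: "W n (\<phi> m) \<in> space (prob_algebra (Yn Y n))" if "m \<in> {1..M}" for m
    using general_channel_prob_space[OF gc \<phi>[OF that]] by (simp add: space_prob_algebra)
  have avg_le1: "(\<Sum>m\<in>{1..M}. measure (W n (\<phi> m)) B) / card {1..M} \<le> 1" for B
  proof -
    have "(\<Sum>m\<in>{1..M}. measure (W n (\<phi> m)) B) \<le> (\<Sum>m\<in>{1..M}. 1)"
      using general_channel_prob_space(1)[OF gc \<phi>] by (intro sum_mono prob_space.prob_le_1) auto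
    then show ?thesis using M by (simp add: divide_le_eq)
  qed
  from measure_bind_pmf_of_set_cases[of "{1..M}", OF _ _ Wprob]
  have cases: "(\<forall>B\<in>sets (Yn Y n). measure ?P2 B = (\<Sum>m\<in>{1..M}. measure (W n (\<phi> m)) B) / card {1..M})
      \<or> (\<forall>B. measure ?P2 B = 0)"
    using M by auto
  then have le1: "measure ?P2 B \<le> 1" if "B \<in> sets (Yn Y n)" for B using that avg_le1 by auto
  have bdd: "\<bar>measure ?P1 B - measure ?P2 B\<bar> \<le> 1" if "B \<in> sets (Yn Y n)" for B
    using le1[OF that] P1.prob_le_1[of B] measure_nonneg[of ?P1 B] measure_nonneg[of ?P2 B]
    unfolding abs_le_iff by linarith
  have close: "\<bar>measure ?P1 B - measure ?P2 B\<bar> < \<kappa>" if "B \<in> sets (Yn Y n)" for B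
    using abs_measure_diff_le_var_dist[OF bdd that] vd by simp
  from cases show ?thesis
  proof
    assume "\<forall>B. measure ?P2 B = 0"
    then have "1 < \<kappa>"
      using close[of "space (Yn Y n)"] P1.prob_space P1(3) by simp
    then show ?thesis using \<kappa> by simp
  qed (use close in \<open>auto intro: less_imp_le\<close>)
qed

definition avg_output :: "(nat \<Rightarrow> (nat \<Rightarrow> real) \<Rightarrow> (nat \<Rightarrow> 'y) measure) \<Rightarrow> nat \<Rightarrow> nat \<Rightarrow>
    (nat \<Rightarrow> nat \<Rightarrow> real) \<Rightarrow> (nat \<Rightarrow> 'y) set \<Rightarrow> real" where
  "avg_output W n M \<phi> B = (\<Sum>m\<in>{1..M}. measure (W n (\<phi> m)) B) / M"

definition approximating_codebook :: "'y measure \<Rightarrow> (nat \<Rightarrow> (nat \<Rightarrow> real) \<Rightarrow> (nat \<Rightarrow> 'y) measure) \<Rightarrow>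
    nat \<Rightarrow> (nat \<Rightarrow> real) set \<Rightarrow> real \<Rightarrow> ((nat \<Rightarrow> 'y) set \<Rightarrow> real) \<Rightarrow> nat \<Rightarrow>
    (nat \<Rightarrow> nat \<Rightarrow> real) \<Rightarrow> bool" where
  "approximating_codebook Y W n S \<kappa> P M \<phi> \<longleftrightarrow> 1 \<le> M \<and> (\<forall>m\<in>{1..M}. \<phi> m \<in> S) \<and>
     (\<forall>B\<in>sets (Yn Y n). \<bar>P B - avg_output W n M \<phi> B\<bar> \<le> \<kappa>)"

lemma approximating_codebook_mono:
  "approximating_codebook Y W n S \<kappa> P M \<phi> \<Longrightarrow> S \<subseteq> S' \<Longrightarrow> approximating_codebook Y W n S' \<kappa> P M \<phi>"
  unfolding approximating_codebook_def by blast

lemma eventually_less_of_limsup_le: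
  assumes "limsup (\<lambda>n. ereal (f n)) \<le> ereal a" "a < b"
  shows "eventually (\<lambda>n. f n < b) sequentially"
proof -
  have "limsup (\<lambda>n. ereal (f n)) < ereal b" using assms by (simp add: le_less_trans)
  from Limsup_lessD[OF this] show ?thesis by simp
qed

lemma eventually_ball_of_eventually_selection:
  fixes I :: "nat \<Rightarrow> 'a set"
  assumes ne: "\<And>n. 1 \<le> n \<Longrightarrow> I n \<noteq> {}"
    and sel: "\<And>s. (\<And>n. 1 \<le> n \<Longrightarrow> s n \<in> I n) \<Longrightarrow> eventually (\<lambda>n. P n (s n)) sequentially"
  shows "eventually (\<lambda>n. \<forall>i\<in>I n. P n i) sequentially"
proof -
  define s where "s n = (SOME i. i \<in> I n \<and> (\<not> P n i \<or> (\<forall>j\<in>I n. P n j)))" for n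
  have s: "s n \<in> I n \<and> (\<not> P n (s n) \<or> (\<forall>j\<in>I n. P n j))" if "1 \<le> n" for n
  proof -
    have "\<exists>i. i \<in> I n \<and> (\<not> P n i \<or> (\<forall>j\<in>I n. P n j))" using ne[OF that] by blast
    then show ?thesis unfolding s_def by (rule someI_ex)
  qed
  have "eventually (\<lambda>n. 1 \<le> n \<and> P n (s n)) sequentially"
    using sel[of s] s by (auto intro: eventually_conj eventually_ge_at_top)
  then show ?thesis by eventually_elim (use s in blast)
qed

text \<open>The resolvability hypothesis is applied to the input process that picks, at each block
  length, a message for which the approximation would fail.\<close>
lemma eventually_approximating_codebooks:
  fixes N :: "nat \<Rightarrow> nat" and Q :: "nat \<Rightarrow> nat \<Rightarrow> (nat \<Rightarrow> real) measure"
  assumes gc: "general_channel Y W"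
    and codes: "\<And>n. 1 \<le> n \<Longrightarrow> 1 \<le> N n \<and> (\<forall>i\<in>{1..N n}. prob_space (Q n i) \<and>
      sets (Q n i) = sets (Rn n) \<and> Xcost c \<Gamma> n \<in> sets (Rn n) \<and> measure (Q n i) (Xcost c \<Gamma> n) = 1)"
    and res: "\<forall>PX\<in>input_processes c \<Gamma>. res_achievable_for Y W c \<delta> \<Gamma> R PX"
    and \<epsilon>: "0 < \<epsilon>" "\<delta> + \<epsilon> < 2"
  shows "eventually (\<lambda>n. \<forall>i\<in>{1..N n}. \<exists>M \<phi>. ln (real M) / real n < R + \<epsilon> \<and>
      approximating_codebook Y W n (Xcost c \<Gamma> n) ((\<delta> + \<epsilon>) / 2) (measure (Q n i \<bind> W n)) M \<phi>)
    sequentially"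
proof (rule eventually_ball_of_eventually_selection)
  show "{1..N n} \<noteq> {}" if "1 \<le> n" for n using codes[OF that] by simp
  fix s assume s: "\<And>n. 1 \<le> n \<Longrightarrow> s n \<in> {1..N n}"
  have "(\<lambda>n. Q n (s n)) \<in> input_processes c \<Gamma>"
    unfolding input_processes_def mem_Collect_eq
  proof (intro allI impI)
    fix n :: nat assume n: "1 \<le> n"
    show "prob_space (Q n (s n)) \<and> sets (Q n (s n)) = sets (Rn n) \<and>
        Xcost c \<Gamma> n \<in> sets (Rn n) \<and> measure (Q n (s n)) (Xcost c \<Gamma> n) = 1"
      using codes[OF n] s[OF n] by blast
  qed
  with res have "res_achievable_for Y W c \<delta> \<Gamma> R (\<lambda>n. Q n (s n))" ..
  then obtain M \<phi> where M: "\<forall>n\<ge>1. 1 \<le> M n \<and> (\<forall>m\<in>{1..M n}. \<phi> n m \<in> Xcost c \<Gamma> n)"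
    and vd: "limsup (\<lambda>n. ereal (var_dist Y n (Q n (s n) \<bind> W n)
          (measure_pmf (pmf_of_set {1..M n}) \<bind> (\<lambda>m. W n (\<phi> n m))))) \<le> ereal \<delta>"
    and rate: "limsup (\<lambda>n. ereal (ln (real (M n)) / real n)) \<le> ereal R"
    unfolding res_achievable_for_def by blast
  have "eventually (\<lambda>n. var_dist Y n (Q n (s n) \<bind> W n)
      (measure_pmf (pmf_of_set {1..M n}) \<bind> (\<lambda>m. W n (\<phi> n m))) < \<delta> + \<epsilon>) sequentially"
    using \<epsilon> by (intro eventually_less_of_limsup_le[OF vd]) simp
  moreover have "eventually (\<lambda>n. ln (real (M n)) / real n < R + \<epsilon>) sequentially"
    using \<epsilon> by (intro eventually_less_of_limsup_le[OF rate]) simp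
  moreover have "eventually (\<lambda>n. 1 \<le> n) sequentially" by (rule eventually_ge_at_top)
  ultimately show "eventually (\<lambda>n. \<exists>M \<phi>. ln (real M) / real n < R + \<epsilon> \<and>
      approximating_codebook Y W n (Xcost c \<Gamma> n) ((\<delta> + \<epsilon>) / 2) (measure (Q n (s n) \<bind> W n)) M \<phi>)
    sequentially"
  proof eventually_elim
    case (elim n)
    then have vdn: "var_dist Y n (Q n (s n) \<bind> W n)
        (measure_pmf (pmf_of_set {1..M n}) \<bind> (\<lambda>m. W n (\<phi> n m))) < \<delta> + \<epsilon>"
      and rn: "ln (real (M n)) / real n < R + \<epsilon>" and n: "1 \<le> n" by auto
    have Q: "prob_space (Q n (s n))" "sets (Q n (s n)) = sets (Rn n)" using codes[OF n] s[OF n] by auto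
    have Mn: "1 \<le> M n" "\<forall>m\<in>{1..M n}. \<phi> n m \<in> Xcost c \<Gamma> n" using M n by auto
    then have "\<phi> n m \<in> space (Rn n)" if "m \<in> {1..M n}" for m
      using that unfolding Xcost_def by blast
    from event_approximation_of_var_dist[OF gc Q Mn(1), where \<phi>="\<phi> n" and \<kappa>="(\<delta> + \<epsilon>) / 2", OF this]
    have "\<forall>B\<in>sets (Yn Y n). \<bar>measure (Q n (s n) \<bind> W n) B - avg_output W n (M n) (\<phi> n) B\<bar>
        \<le> (\<delta> + \<epsilon>) / 2"
      unfolding avg_output_def using vdn \<epsilon> by simp
    with Mn rn show ?case unfolding approximating_codebook_def by blast
  qed
qed

section \<open>Counting rounded codebooks\<close>

definition grid_round :: "nat \<Rightarrow> (nat \<Rightarrow> real) \<Rightarrow> real \<Rightarrow> (nat \<Rightarrow> real) \<Rightarrow> (nat \<Rightarrow> real)" where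
  "grid_round n a \<eta> x = restrict (\<lambda>i. a i + \<eta> * real (nat \<lfloor>(x i - a i) / \<eta>\<rfloor>)) {..<n}"

definition cube_grid :: "nat \<Rightarrow> (nat \<Rightarrow> real) \<Rightarrow> real \<Rightarrow> nat \<Rightarrow> (nat \<Rightarrow> real) set" where
  "cube_grid n a \<eta> K = (\<lambda>k. restrict (\<lambda>i. a i + \<eta> * real (k i)) {..<n}) ` PiE {..<n} (\<lambda>_. {0..K})"

lemma grid_round_apply_bounds:
  assumes x: "x \<in> cube n a l" and i: "i < n" and \<eta>: "0 < \<eta>"
  shows "a i \<le> grid_round n a \<eta> x i" "grid_round n a \<eta> x i \<le> x i" "x i - grid_round n a \<eta> x i < \<eta>"
    "nat \<lfloor>(x i - a i) / \<eta>\<rfloor> \<le> nat \<lfloor>l / \<eta>\<rfloor>"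
proof -
  define t where "t = (x i - a i) / \<eta>"
  have xi: "a i \<le> x i" "x i \<le> a i + l" using x i unfolding cube_def by auto
  then have t: "0 \<le> t" "t \<le> l / \<eta>" unfolding t_def using \<eta> by (simp_all add: divide_right_mono)
  have q: "grid_round n a \<eta> x i = a i + \<eta> * of_int \<lfloor>t\<rfloor>"
    unfolding grid_round_def using i t by (simp flip: t_def)
  have "of_int \<lfloor>t\<rfloor> \<le> t" "t < of_int \<lfloor>t\<rfloor> + 1" "0 \<le> \<lfloor>t\<rfloor>" using t by linarith+
  then have "\<eta> * of_int \<lfloor>t\<rfloor> \<le> \<eta> * t" "\<eta> * t < \<eta> * (of_int \<lfloor>t\<rfloor> + 1)" "0 \<le> \<eta> * of_int \<lfloor>t\<rfloor>"
    using \<eta> by simp_all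
  moreover have "\<eta> * t = x i - a i" unfolding t_def using \<eta> by simp
  ultimately show "a i \<le> grid_round n a \<eta> x i" "grid_round n a \<eta> x i \<le> x i"
    "x i - grid_round n a \<eta> x i < \<eta>" unfolding q by (simp_all add: algebra_simps)
  show "nat \<lfloor>(x i - a i) / \<eta>\<rfloor> \<le> nat \<lfloor>l / \<eta>\<rfloor>"
    using t unfolding t_def by (simp add: floor_mono nat_mono)
qed

lemma grid_round_in_cube:
  assumes "x \<in> cube n a l" "0 < \<eta>"
  shows "grid_round n a \<eta> x \<in> cube n a l"
proof -
  have "grid_round n a \<eta> x \<in> space (Rn n)" unfolding grid_round_def space_Rn by auto
  moreover have "x i \<le> a i + l" if "i < n" for i using assms that unfolding cube_def by auto
  ultimately show ?thesis
    using grid_round_apply_bounds[OF assms(1) _ assms(2)] unfolding cube_def by force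
qed

lemma grid_round_in_cube_grid:
  assumes "x \<in> cube n a l" "0 < \<eta>"
  shows "grid_round n a \<eta> x \<in> cube_grid n a \<eta> (nat \<lfloor>l / \<eta>\<rfloor>)"
proof -
  let ?k = "restrict (\<lambda>i. nat \<lfloor>(x i - a i) / \<eta>\<rfloor>) {..<n}"
  have "?k \<in> PiE {..<n} (\<lambda>_. {0..nat \<lfloor>l / \<eta>\<rfloor>})"
    using grid_round_apply_bounds(4)[OF assms(1) _ assms(2)] by auto
  moreover have "grid_round n a \<eta> x = restrict (\<lambda>i. a i + \<eta> * real (?k i)) {..<n}"
    unfolding grid_round_def by (auto simp: restrict_def fun_eq_iff)
  ultimately show ?thesis unfolding cube_grid_def by blast
qed

lemma finite_cube_grid: "finite (cube_grid n a \<eta> K)"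
  unfolding cube_grid_def by (intro finite_imageI finite_PiE) auto

lemma card_cube_grid_le: "card (cube_grid n a \<eta> K) \<le> (K + 1) ^ n"
proof -
  have "card (cube_grid n a \<eta> K) \<le> card (PiE {..<n} (\<lambda>_. {0..K}))"
    unfolding cube_grid_def by (rule card_image_le) (intro finite_PiE, auto)
  also have "\<dots> = (K + 1) ^ n" by (simp add: card_PiE)
  finally show ?thesis .
qed

lemma enorm_sub_grid_round_le:
  assumes "x \<in> cube n a l" "0 < \<eta>"
  shows "enorm n (\<lambda>i. x i - grid_round n a \<eta> x i) \<le> sqrt n * \<eta>"
proof -
  have "(\<Sum>i<n. (x i - grid_round n a \<eta> x i)\<^sup>2) \<le> (\<Sum>i<n. \<eta>\<^sup>2)"
    using grid_round_apply_bounds[OF assms(1) _ assms(2)] by (intro sum_mono power_mono) force+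
  then have "enorm n (\<lambda>i. x i - grid_round n a \<eta> x i) \<le> sqrt (n * \<eta>\<^sup>2)"
    unfolding enorm_def by (intro real_sqrt_le_mono) simp
  also have "\<dots> = sqrt n * \<eta>" using assms(2) by (simp add: real_sqrt_mult)
  finally show ?thesis .
qed

lemma abs_avg_output_diff_le_of_same_grid_round:
  assumes L: "0 \<le> L" and \<eta>: "0 < \<eta>" and M: "1 \<le> M"
    and lip: "\<And>x v. x \<in> cube n a l \<Longrightarrow> v \<in> cube n a l \<Longrightarrow>
        \<bar>measure (W n v) B - measure (W n x) B\<bar> \<le> L * enorm n (\<lambda>i. v i - x i)"
    and \<phi>: "\<And>m. m \<in> {1..M} \<Longrightarrow> \<phi> m \<in> cube n a l" and \<psi>: "\<And>m. m \<in> {1..M} \<Longrightarrow> \<psi> m \<in> cube n a l"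
    and same: "\<And>m. m \<in> {1..M} \<Longrightarrow> grid_round n a \<eta> (\<phi> m) = grid_round n a \<eta> (\<psi> m)"
  shows "\<bar>avg_output W n M \<phi> B - avg_output W n M \<psi> B\<bar> \<le> 2 * (L * sqrt n * \<eta>)"
proof -
  have near: "\<bar>measure (W n x) B - measure (W n (grid_round n a \<eta> x)) B\<bar> \<le> L * (sqrt n * \<eta>)"
    if "x \<in> cube n a l" for x
    using lip[OF grid_round_in_cube[OF that \<eta>] that] mult_left_mono[OF enorm_sub_grid_round_le[OF that \<eta>] L]
    by linarith
  have "\<bar>avg_output W n M \<phi> B - avg_output W n M \<psi> B\<bar>
      = \<bar>\<Sum>m\<in>{1..M}. measure (W n (\<phi> m)) B - measure (W n (\<psi> m)) B\<bar> / M"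
    unfolding avg_output_def by (simp add: sum_subtractf diff_divide_distrib[symmetric] abs_divide)
  also have "\<dots> \<le> (\<Sum>m\<in>{1..M}. \<bar>measure (W n (\<phi> m)) B - measure (W n (\<psi> m)) B\<bar>) / M"
    by (intro divide_right_mono sum_abs) simp
  also have "\<dots> \<le> (\<Sum>m\<in>{1..M}. 2 * (L * sqrt n * \<eta>)) / M"
    using near[OF \<phi>] near[OF \<psi>] same by (intro divide_right_mono sum_mono) force+
  also have "\<dots> = 2 * (L * sqrt n * \<eta>)" using M by simp
  finally show ?thesis .
qed

text \<open>Two messages whose approximating codebooks round to the same grid points would have output
  distributions too close to be told apart by the decoding sets, so the rounded codebooks are an
  injective encoding of the messages.\<close>
lemma identification_code_size_le:
  fixes N Mmax :: nat and P :: "nat \<Rightarrow> (nat \<Rightarrow> 'y) set \<Rightarrow> real"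
  assumes L: "0 \<le> L" and \<eta>: "0 < \<eta>"
    and lip: "\<And>B x v. B \<in> sets (Yn Y n) \<Longrightarrow> x \<in> cube n a l \<Longrightarrow> v \<in> cube n a l \<Longrightarrow>
        \<bar>measure (W n v) B - measure (W n x) B\<bar> \<le> L * enorm n (\<lambda>i. v i - x i)"
    and Dec: "\<And>i. i \<in> {1..N} \<Longrightarrow> Dec i \<in> sets (Yn Y n)"
    and err1: "\<And>i. i \<in> {1..N} \<Longrightarrow> 1 - \<mu> \<le> P i (Dec i)"
    and err2: "\<And>i j. i \<in> {1..N} \<Longrightarrow> j \<in> {1..N} \<Longrightarrow> i \<noteq> j \<Longrightarrow> P j (Dec i) \<le> lam"
    and approx: "\<And>i. i \<in> {1..N} \<Longrightarrow> \<exists>M \<phi>. M \<le> Mmax \<and> approximating_codebook Y W n (cube n a l) \<kappa> (P i) M \<phi>"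
    and sep: "2 * \<kappa> + 2 * (L * sqrt n * \<eta>) < 1 - \<mu> - lam"
  shows "N \<le> Mmax * (nat \<lfloor>l / \<eta>\<rfloor> + 1) ^ (n * Mmax)"
proof -
  let ?G = "cube_grid n a \<eta> (nat \<lfloor>l / \<eta>\<rfloor>)"
  obtain M \<phi> where M: "\<And>i. i \<in> {1..N} \<Longrightarrow> M i \<le> Mmax"
    and cb: "\<And>i. i \<in> {1..N} \<Longrightarrow> approximating_codebook Y W n (cube n a l) \<kappa> (P i) (M i) (\<phi> i)"
    using approx by metis
  define code where "code i = (M i, restrict (\<lambda>m. grid_round n a \<eta> (\<phi> i (min m (M i)))) {1..Mmax})" for i
  have \<phi>: "\<phi> i m \<in> cube n a l" if "i \<in> {1..N}" "m \<in> {1..M i}" for i m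
    using cb[OF that(1)] that(2) unfolding approximating_codebook_def by blast
  have "code i \<in> {1..Mmax} \<times> PiE {1..Mmax} (\<lambda>_. ?G)" if i: "i \<in> {1..N}" for i
  proof -
    have M1: "1 \<le> M i" using cb[OF i] unfolding approximating_codebook_def by blast
    have "grid_round n a \<eta> (\<phi> i (min m (M i))) \<in> ?G" if "m \<in> {1..Mmax}" for m
      using \<phi>[OF i, of "min m (M i)"] M1 that by (intro grid_round_in_cube_grid[OF _ \<eta>]) auto
    then show ?thesis unfolding code_def using M1 M[OF i] by auto
  qed
  then have "code ` {1..N} \<subseteq> {1..Mmax} \<times> PiE {1..Mmax} (\<lambda>_. ?G)" by blast
  moreover have "inj_on code {1..N}"
  proof (rule inj_onI, rule ccontr)
    fix i j assume i: "i \<in> {1..N}" and j: "j \<in> {1..N}" and eq: "code i = code j" and "i \<noteq> j"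
    have Mij: "M i = M j" using eq unfolding code_def by simp
    have same: "grid_round n a \<eta> (\<phi> i m) = grid_round n a \<eta> (\<phi> j m)" if "m \<in> {1..M i}" for m
      using fun_cong[OF arg_cong[where f=snd, OF eq], of m] that Mij M[OF i] by (simp add: code_def)
    let ?B = "Dec i"
    have "\<bar>P i ?B - avg_output W n (M i) (\<phi> i) ?B\<bar> \<le> \<kappa>" "\<bar>P j ?B - avg_output W n (M i) (\<phi> j) ?B\<bar> \<le> \<kappa>"
      using cb[OF i] cb[OF j] Dec[OF i] Mij unfolding approximating_codebook_def by auto
    moreover have "\<bar>avg_output W n (M i) (\<phi> i) ?B - avg_output W n (M i) (\<phi> j) ?B\<bar> \<le> 2 * (L * sqrt n * \<eta>)"
    proof (rule abs_avg_output_diff_le_of_same_grid_round[OF L \<eta>])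
      show "1 \<le> M i" using cb[OF i] unfolding approximating_codebook_def by blast
    qed (use lip[OF Dec[OF i]] \<phi>[OF i] \<phi>[OF j] Mij same in auto)
    ultimately show False using err1[OF i] err2[OF i j \<open>i \<noteq> j\<close>] sep by linarith
  qed
  ultimately have "card {1..N} \<le> card ({1..Mmax} \<times> PiE {1..Mmax} (\<lambda>_. ?G))"
    by (intro card_inj_on_le finite_cartesian_product finite_PiE finite_cube_grid) auto
  also have "\<dots> = Mmax * card ?G ^ Mmax" by (simp add: card_cartesian_product card_PiE)
  also have "\<dots> \<le> Mmax * ((nat \<lfloor>l / \<eta>\<rfloor> + 1) ^ n) ^ Mmax"
    by (intro mult_left_mono power_mono card_cube_grid_le) auto
  finally show ?thesis by (simp add: power_mult)
qed

section \<open>The converse\<close>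

lemma ln_ln_le_of_le_mult_power:
  fixes N Mmax Kp n :: nat
  assumes N: "2 \<le> N" and Nb: "N \<le> Mmax * Kp ^ (n * Mmax)" and Kp: "1 \<le> Kp" and M: "1 \<le> Mmax"
  shows "ln (ln (real N)) \<le> ln (real Mmax) + ln (1 + real n * ln (real Kp))"
proof -
  have "real N \<le> real Mmax * real Kp ^ (n * Mmax)" using Nb by (metis of_nat_le_iff of_nat_mult of_nat_power)
  then have "ln (real N) \<le> ln (real Mmax * real Kp ^ (n * Mmax))" using N by (intro ln_mono) auto
  also have "\<dots> = ln (real Mmax) + real (n * Mmax) * ln (real Kp)"
    using M Kp by (simp add: ln_mult ln_realpow)
  also have "\<dots> \<le> real Mmax * (1 + real n * ln (real Kp))"
    using ln_le_minus_one[of "real Mmax"] M by (simp add: algebra_simps)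
  finally have "ln (ln (real N)) \<le> ln (real Mmax * (1 + real n * ln (real Kp)))"
    using N by (intro ln_mono) auto
  also have "\<dots> = ln (real Mmax) + ln (1 + real n * ln (real Kp))"
    using M Kp add_pos_nonneg[of 1 "real n * ln (real Kp)"] by (simp add: ln_mult)
  finally show ?thesis .
qed

lemma eventually_ln_poly_le:
  fixes c e :: real assumes "0 < e"
  shows "eventually (\<lambda>n::nat. ln (1 + real n * (c + real n)) \<le> e * real n) at_top"
  using assms by real_asymp

lemma ln_grid_size_le:
  fixes n K :: nat and l Bq \<epsilon> :: real
  assumes n: "1 \<le> n" and l: "2 \<le> l" and Bq: "1 \<le> Bq" and \<epsilon>: "0 < \<epsilon>" "\<epsilon> \<le> 1"
    and K: "real K \<le> l * (2 * sqrt (Bq + 1)) * sqrt n / \<epsilon>"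
  shows "ln (real K + 1) \<le> ln 5 + ln (1 / \<epsilon>) + ln l + ln Bq + ln n"
proof -
  define X where "X = l * Bq * n / \<epsilon>"
  have n1: "(1::real) \<le> n" using n by simp
  have sn: "sqrt n \<le> n" and sB: "sqrt (Bq + 1) \<le> Bq + 1"
    using n1 Bq by (auto intro!: real_le_lsqrt simp: power2_eq_square)
  have "2 * sqrt (Bq + 1) \<le> 4 * Bq" using sB Bq by linarith
  then have "l * (2 * sqrt (Bq + 1)) \<le> l * (4 * Bq)" using l by (simp add: mult_left_mono)
  then have "l * (2 * sqrt (Bq + 1)) * sqrt n \<le> l * (4 * Bq) * n"
    by (rule mult_mono[OF _ sn]) (use l Bq in auto)
  then have "l * (2 * sqrt (Bq + 1)) * sqrt n / \<epsilon> \<le> l * (4 * Bq) * n / \<epsilon>"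
    using \<epsilon> by (simp add: divide_right_mono)
  with K have "real K \<le> l * (4 * Bq) * n / \<epsilon>" by (rule order_trans)
  then have "real K \<le> 4 * X" unfolding X_def using \<epsilon> by (simp add: field_simps)
  moreover have "1 \<le> X"
  proof -
    have "1 \<le> l * Bq" using mult_mono[of 1 l 1 Bq] l Bq by simp
    then have "1 \<le> l * Bq * n" using mult_mono[of 1 "l * Bq" 1 "real n"] n1 by simp
    moreover have "l * Bq * n / 1 \<le> l * Bq * n / \<epsilon>"
      using \<epsilon> calculation by (intro divide_left_mono) auto
    ultimately show ?thesis unfolding X_def by simp
  qed
  ultimately have "real K + 1 \<le> 5 * X" by linarith
  then have "ln (real K + 1) \<le> ln (5 * X)" by (intro ln_mono) auto
  also have "\<dots> = ln 5 + ln (1 / \<epsilon>) + ln l + ln Bq + ln n"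
    using l Bq n1 \<epsilon> unfolding X_def by (simp add: ln_mult ln_div)
  finally show ?thesis .
qed

text \<open>The grid size is polynomial in \<open>n\<close>, \<open>1/\<epsilon>\<close>, the edge length and the Hessian
  bound, and the last two are at most doubly exponential in \<open>\<epsilon> n\<close>.\<close>
lemma ln_one_plus_n_ln_grid_size_le:
  fixes n K :: nat and l Bq \<epsilon> :: real
  assumes n: "1 \<le> n" and l: "2 \<le> l" and Bq: "1 \<le> Bq" and \<epsilon>: "0 < \<epsilon>" "\<epsilon> \<le> 1"
    and K: "real K \<le> l * (2 * sqrt (Bq + 1)) * sqrt n / \<epsilon>"
    and hl: "ln (ln l) < \<epsilon> * n" and hB: "ln (max 1 (ln Bq)) < \<epsilon> * n"
    and hpoly: "ln (1 + n * ((ln 5 + ln (1 / \<epsilon>) + 2) + n)) \<le> \<epsilon> * n"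
  shows "ln (1 + n * ln (real K + 1)) \<le> 2 * \<epsilon> * n"
proof -
  define E where "E = exp (\<epsilon> * n)"
  define c where "c = ln 5 + ln (1 / \<epsilon>)"
  have E1: "1 \<le> E" unfolding E_def using \<epsilon> by simp
  have c0: "0 \<le> c" unfolding c_def using \<epsilon> by simp
  have n1: "(1::real) \<le> n" using n by simp
  have "ln l = exp (ln (ln l))" using l by simp
  also have "\<dots> \<le> E" unfolding E_def using hl by simp
  finally have "ln l \<le> E" .
  moreover have "ln Bq \<le> exp (ln (max 1 (ln Bq)))" by simp
  moreover have "exp (ln (max 1 (ln Bq))) \<le> E"
    unfolding E_def by (rule less_imp_le[OF exp_less_mono[OF hB]])
  moreover have "ln n \<le> n" using n1 ln_le_minus_one[of "real n"] by simp
  ultimately have "ln (real K + 1) \<le> c + 2 * E + n"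
    using ln_grid_size_le[OF n l Bq \<epsilon> K] unfolding c_def by linarith
  also have "\<dots> \<le> (c + 2 + n) * E"
  proof -
    have "c * 1 \<le> c * E" "real n * 1 \<le> real n * E"
      using mult_left_mono[OF E1, of c] mult_left_mono[OF E1, of "real n"] c0 by simp_all
    then show ?thesis by (simp add: algebra_simps)
  qed
  finally have "1 + n * ln (real K + 1) \<le> 1 + n * ((c + 2 + n) * E)"
    using n1 by (simp add: mult_left_mono)
  also have "\<dots> \<le> (1 + n * (c + 2 + n)) * E" using E1 by (simp add: algebra_simps)
  finally have "ln (1 + n * ln (real K + 1)) \<le> ln ((1 + n * (c + 2 + n)) * E)"
    by (intro ln_mono) (auto intro: add_pos_nonneg)
  also have "\<dots> = ln (1 + n * (c + 2 + n)) + \<epsilon> * n"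
    using add_pos_nonneg[of 1 "real n * (c + 2 + n)"] c0 unfolding E_def by (simp add: ln_mult)
  also have "\<dots> \<le> 2 * \<epsilon> * n" using hpoly unfolding c_def by simp
  finally show ?thesis .
qed

lemma le_nat_floor_exp_of_ln_div_less:
  assumes "1 \<le> M" "1 \<le> n" "ln (real M) / real n < r"
  shows "M \<le> nat \<lfloor>exp (real n * r)\<rfloor>"
proof -
  have "ln (real M) < real n * r" using assms by (simp add: divide_less_eq mult.commute)
  then have "exp (ln (real M)) < exp (real n * r)" by (rule exp_less_mono)
  then show ?thesis using assms(1) by (simp add: le_nat_floor less_imp_le)
qed

lemma decoding_prob_ge_of_QW_compl_le:
  assumes gc: "general_channel Y W" and Q: "prob_space Q" "sets Q = sets (Rn n)"
    and D: "D \<in> sets (Yn Y n)" and err: "QW W n Q (space (Yn Y n) - D) \<le> mu"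
  shows "1 - mu \<le> measure (Q \<bind> W n) D"
proof -
  note QW = general_channel_bind[OF gc Q]
  have "measure (Q \<bind> W n) (space (Yn Y n) - D) = 1 - measure (Q \<bind> W n) D"
    using prob_space.prob_compl[OF QW(1), of D] QW(2,3) D by simp
  moreover have "measure (Q \<bind> W n) (space (Yn Y n) - D) \<le> mu"
    using QW(4)[of "space (Yn Y n) - D"] err D by auto
  ultimately show ?thesis by simp
qed

text \<open>Rounding each codeword to a grid of mesh \<open>\<eta> = \<epsilon> / (L \<surd>n)\<close> moves every output
  probability by at most \<open>\<epsilon>\<close>, so distinct messages keep distinct rounded codebooks.\<close>
lemma identification_code_size_le_at_block_length:
  fixes N Mmax :: nat and Q :: "nat \<Rightarrow> (nat \<Rightarrow> real) measure" and Dec :: "nat \<Rightarrow> (nat \<Rightarrow> 'y) set"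
  assumes gc: "general_channel Y W" and n: "1 \<le> n"
    and A2: "\<And>y. y \<in> cube n a l \<Longrightarrow>
      (\<exists>d>0. \<forall>v\<in>space (Rn n). enorm n (\<lambda>i. v i - y i) < d \<longrightarrow> KLW_finite W n y v) \<and>
      twice_differentiable_at n (KLW W n y) y"
    and F: "\<And>y. y \<in> cube n a l \<Longrightarrow> quad_norm n (Fmat W n y) \<le> Bq" and Bq: "0 \<le> Bq"
    and \<epsilon>: "0 < \<epsilon>"
    and code: "\<And>i. i \<in> {1..N} \<Longrightarrow> prob_space (Q i) \<and> sets (Q i) = sets (Rn n) \<and>
      Dec i \<in> sets (Yn Y n) \<and> QW W n (Q i) (space (Yn Y n) - Dec i) \<le> mu"
    and err2: "\<And>i j. i \<in> {1..N} \<Longrightarrow> j \<in> {1..N} \<Longrightarrow> i \<noteq> j \<Longrightarrow> QW W n (Q j) (Dec i) \<le> lam"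
    and approx: "\<And>i. i \<in> {1..N} \<Longrightarrow> \<exists>M \<phi>. M \<le> Mmax \<and>
      approximating_codebook Y W n (cube n a l) \<kappa> (measure (Q i \<bind> W n)) M \<phi>"
    and sep: "2 * \<kappa> + 2 * \<epsilon> < 1 - mu - lam"
  shows "N \<le> Mmax * (nat \<lfloor>l * (2 * sqrt (Bq + 1)) * sqrt n / \<epsilon>\<rfloor> + 1) ^ (n * Mmax)"
proof -
  define L where "L = 2 * sqrt (Bq + 1)"
  define \<eta> where "\<eta> = \<epsilon> / (L * sqrt n)"
  have L: "0 < L" unfolding L_def using Bq by simp
  have \<eta>: "0 < \<eta>" "L * sqrt n * \<eta> = \<epsilon>" unfolding \<eta>_def using \<epsilon> L n by simp_all
  have lip: "\<bar>measure (W n v) B - measure (W n x) B\<bar> \<le> L * enorm n (\<lambda>i. v i - x i)"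
    if "B \<in> sets (Yn Y n)" "x \<in> cube n a l" "v \<in> cube n a l" for B x v
    unfolding L_def using Bq by (intro measure_channel_lipschitz_on_cube[OF gc A2 F _ that]) auto
  have Dec: "Dec i \<in> sets (Yn Y n)" if "i \<in> {1..N}" for i using code[OF that] by blast
  have err1: "1 - mu \<le> measure (Q i \<bind> W n) (Dec i)" if "i \<in> {1..N}" for i
    using code[OF that] by (intro decoding_prob_ge_of_QW_compl_le[OF gc]) auto
  have err2': "measure (Q j \<bind> W n) (Dec i) \<le> lam" if "i \<in> {1..N}" "j \<in> {1..N}" "i \<noteq> j" for i j
    using general_channel_bind(4)[OF gc _ _ Dec[OF that(1)]] code[OF that(2)] err2[OF that] by auto
  have sep': "2 * \<kappa> + 2 * (L * sqrt n * \<eta>) < 1 - mu - lam" using sep \<eta>(2) by simp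
  have "N \<le> Mmax * (nat \<lfloor>l / \<eta>\<rfloor> + 1) ^ (n * Mmax)"
    by (rule identification_code_size_le[where P="\<lambda>i. measure (Q i \<bind> W n)" and N=N and
          Dec=Dec and \<mu>=mu and lam=lam and \<kappa>=\<kappa> and Mmax=Mmax and L=L and \<eta>=\<eta>
          and Y=Y and W=W and n=n and a=a and l=l,
          OF less_imp_le[OF L] \<eta>(1) lip Dec err1 err2' approx sep'])
  then show ?thesis unfolding \<eta>_def L_def by (simp add: mult.assoc)
qed

lemma ln_ln_code_size_le_at_block_length:
  fixes N :: nat and Q :: "nat \<Rightarrow> (nat \<Rightarrow> real) measure" and Dec :: "nat \<Rightarrow> (nat \<Rightarrow> 'y) set"
  assumes gc: "general_channel Y W" and n: "1 \<le> n" and l: "2 \<le> l"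
    and Xcube: "Xcost c \<Gamma> n \<subseteq> cube n a l"
    and A2: "\<And>y. y \<in> cube n a l \<Longrightarrow>
      (\<exists>d>0. \<forall>v\<in>space (Rn n). enorm n (\<lambda>i. v i - y i) < d \<longrightarrow> KLW_finite W n y v) \<and>
      twice_differentiable_at n (KLW W n y) y"
    and F: "\<And>y. y \<in> cube n a l \<Longrightarrow> quad_norm n (Fmat W n y) \<le> Bq" and Bq: "1 \<le> Bq"
    and \<epsilon>: "0 < \<epsilon>" "\<epsilon> \<le> 1"
    and hl: "ln (ln l) < \<epsilon> * n" and hB: "ln (max 1 (ln Bq)) < \<epsilon> * n"
    and hpoly: "ln (1 + n * ((ln 5 + ln (1 / \<epsilon>) + 2) + n)) \<le> \<epsilon> * n"
    and N: "2 \<le> N"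
    and code: "\<And>i. i \<in> {1..N} \<Longrightarrow> prob_space (Q i) \<and> sets (Q i) = sets (Rn n) \<and>
      Dec i \<in> sets (Yn Y n) \<and> QW W n (Q i) (space (Yn Y n) - Dec i) \<le> mu"
    and err2: "\<And>i j. i \<in> {1..N} \<Longrightarrow> j \<in> {1..N} \<Longrightarrow> i \<noteq> j \<Longrightarrow> QW W n (Q j) (Dec i) \<le> lam"
    and approx: "\<And>i. i \<in> {1..N} \<Longrightarrow> \<exists>M \<phi>. ln (real M) / real n < R + \<epsilon> \<and>
      approximating_codebook Y W n (Xcost c \<Gamma> n) ((\<delta> + \<epsilon>) / 2) (measure (Q i \<bind> W n)) M \<phi>"
    and sep: "\<delta> + 3 * \<epsilon> < 1 - mu - lam"
  shows "ln (ln (real N)) / real n \<le> R + 3 * \<epsilon>"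
proof -
  define Mmax where "Mmax = nat \<lfloor>exp (real n * (R + \<epsilon>))\<rfloor>"
  define K where "K = nat \<lfloor>l * (2 * sqrt (Bq + 1)) * sqrt n / \<epsilon>\<rfloor>"
  have approx': "\<exists>M \<phi>. M \<le> Mmax \<and>
      approximating_codebook Y W n (cube n a l) ((\<delta> + \<epsilon>) / 2) (measure (Q i \<bind> W n)) M \<phi>"
    if i: "i \<in> {1..N}" for i
  proof -
    obtain M \<phi> where r: "ln (real M) / real n < R + \<epsilon>"
      and cb: "approximating_codebook Y W n (Xcost c \<Gamma> n) ((\<delta> + \<epsilon>) / 2) (measure (Q i \<bind> W n)) M \<phi>"
      using approx[OF i] by blast
    then have "M \<le> Mmax"
      unfolding Mmax_def approximating_codebook_def using n by (intro le_nat_floor_exp_of_ln_div_less) auto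
    then show ?thesis using approximating_codebook_mono[OF cb Xcube] by blast
  qed
  have "N \<le> Mmax * (K + 1) ^ (n * Mmax)" unfolding K_def
    using sep Bq by (intro identification_code_size_le_at_block_length[OF gc n A2 F _ \<epsilon>(1) code err2 approx'])
      (simp_all add: field_simps)
  moreover have "1 \<le> Mmax" using approx'[of 1] N unfolding approximating_codebook_def by auto
  ultimately have "ln (ln (real N)) \<le> ln (real Mmax) + ln (1 + real n * ln (real K + 1))"
    using ln_ln_le_of_le_mult_power[OF N, of Mmax "K + 1" n] by (simp add: add.commute)
  moreover have "ln (real Mmax) \<le> real n * (R + \<epsilon>)"
  proof -
    have "real Mmax \<le> exp (real n * (R + \<epsilon>))" unfolding Mmax_def by simp
    then have "ln (real Mmax) \<le> ln (exp (real n * (R + \<epsilon>)))"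
      using \<open>1 \<le> Mmax\<close> by (intro ln_mono) auto
    then show ?thesis by simp
  qed
  moreover have "ln (1 + real n * ln (real K + 1)) \<le> 2 * \<epsilon> * n"
  proof (rule ln_one_plus_n_ln_grid_size_le[OF n l Bq \<epsilon> _ hl hB hpoly])
    have "0 \<le> l * (2 * sqrt (Bq + 1)) * sqrt n / \<epsilon>" using l \<epsilon> Bq by simp
    then show "real K \<le> l * (2 * sqrt (Bq + 1)) * sqrt n / \<epsilon>" unfolding K_def by simp
  qed
  ultimately have "ln (ln (real N)) \<le> real n * (R + 3 * \<epsilon>)" by (simp add: algebra_simps)
  then show ?thesis using n by (simp add: divide_le_eq mult.commute)
qed

lemma bound_of_A2_term_less:
  fixes f :: "(nat \<Rightarrow> real) \<Rightarrow> real"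
  assumes "A2_term n (SUP x\<in>C. ereal (f x)) < ereal \<epsilon>" "1 \<le> n"
  obtains Bq where "1 \<le> Bq" "\<And>x. x \<in> C \<Longrightarrow> f x \<le> Bq" "ln (max 1 (ln Bq)) < \<epsilon> * n"
proof -
  let ?S = "SUP x\<in>C. ereal (f x)"
  have fin: "?S \<noteq> \<infinity>" using assms(1) unfolding A2_term_def by auto
  have "f x \<le> real_of_ereal ?S" if "x \<in> C" for x
    using SUP_upper[OF that, of "\<lambda>x. ereal (f x)"] fin by (cases ?S) auto
  moreover have "ln (max 1 (ln (max 1 (real_of_ereal ?S)))) < \<epsilon> * n"
    using assms fin unfolding A2_term_def by (simp add: divide_less_eq mult.commute)
  ultimately show ?thesis by (intro that[of "max 1 (real_of_ereal ?S)"]) force+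
qed

lemma id_rate_le_res_rate:
  fixes Y :: "'y measure" and W :: "nat \<Rightarrow> (nat \<Rightarrow> real) \<Rightarrow> (nat \<Rightarrow> 'y) measure"
  assumes gc: "general_channel Y W" and A: "A1_A2 W c \<Gamma>"
    and \<mu>: "0 \<le> \<mu>" and lm: "0 \<le> lm" and \<delta>: "\<delta> < 1 - \<mu> - lm"
    and id: "id_achievable Y W c \<mu> lm \<Gamma> R1"
    and res: "\<forall>PX\<in>input_processes c \<Gamma>. res_achievable_for Y W c \<delta> \<Gamma> R2 PX"
  shows "R1 \<le> R2"
proof (rule ccontr)
  assume "\<not> R1 \<le> R2"
  obtain N Q Dec mu lam where code: "\<forall>n\<ge>1. N n \<ge> 1 \<and>
         (\<forall>i\<in>{1..N n}. prob_space (Q n i) \<and> sets (Q n i) = sets (Rn n) \<and>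
             Xcost c \<Gamma> n \<in> sets (Rn n) \<and> measure (Q n i) (Xcost c \<Gamma> n) = 1 \<and>
             Dec n i \<in> sets (Yn Y n) \<and> QW W n (Q n i) (space (Yn Y n) - Dec n i) \<le> mu n) \<and>
         (\<forall>i\<in>{1..N n}. \<forall>j\<in>{1..N n}. i \<noteq> j \<longrightarrow> QW W n (Q n j) (Dec n i) \<le> lam n)"
    and lim_mu: "limsup (\<lambda>n. ereal (mu n)) \<le> ereal \<mu>"
    and lim_lam: "limsup (\<lambda>n. ereal (lam n)) \<le> ereal lm"
    and lim_rate: "liminf (idrate N) \<ge> ereal R1"
    using id unfolding id_achievable_def by blast
  obtain a l where A1: "\<forall>n\<ge>1. l n \<ge> 2 \<and> Xcost c \<Gamma> n \<subseteq> cube n (a n) (l n)"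
    and lim_l: "limsup (\<lambda>n. ereal (ln (ln (l n)) / real n)) = 0"
    and A2: "\<forall>n\<ge>1. \<forall>x \<in> cube n (a n) (l n).
          (\<exists>d>0. \<forall>v\<in>space (Rn n). enorm n (\<lambda>i. v i - x i) < d \<longrightarrow> KLW_finite W n x v) \<and>
          twice_differentiable_at n (KLW W n x) x"
    and lim_F: "limsup (\<lambda>n. A2_term n (SUP x \<in> cube n (a n) (l n). ereal (quad_norm n (Fmat W n x)))) = 0"
    using A unfolding A1_A2_def by blast
  define \<epsilon> where "\<epsilon> = min ((1 - \<mu> - lm - \<delta>) / 6) (min ((R1 - R2) / 4) 1)"
  have \<epsilon>: "0 < \<epsilon>" "\<epsilon> \<le> 1" "6 * \<epsilon> \<le> 1 - \<mu> - lm - \<delta>" "4 * \<epsilon> \<le> R1 - R2"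
    using \<delta> \<open>\<not> R1 \<le> R2\<close> unfolding \<epsilon>_def by (auto simp: min_def)
  have "eventually (\<lambda>n. (\<forall>i\<in>{1..N n}. \<exists>M \<phi>. ln (real M) / real n < R2 + \<epsilon> \<and>
      approximating_codebook Y W n (Xcost c \<Gamma> n) ((\<delta> + \<epsilon>) / 2) (measure (Q n i \<bind> W n)) M \<phi>) \<and>
      mu n < \<mu> + \<epsilon> \<and> lam n < lm + \<epsilon> \<and> ereal (R1 - \<epsilon>) < idrate N n \<and>
      ln (ln (l n)) / real n < \<epsilon> \<and>
      A2_term n (SUP x \<in> cube n (a n) (l n). ereal (quad_norm n (Fmat W n x))) < ereal \<epsilon> \<and>
      ln (1 + real n * ((ln 5 + ln (1 / \<epsilon>) + 2) + real n)) \<le> \<epsilon> * real n \<and> 1 \<le> n) sequentially"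
  proof (intro eventually_conj)
    show "eventually (\<lambda>n. \<forall>i\<in>{1..N n}. \<exists>M \<phi>. ln (real M) / real n < R2 + \<epsilon> \<and>
        approximating_codebook Y W n (Xcost c \<Gamma> n) ((\<delta> + \<epsilon>) / 2) (measure (Q n i \<bind> W n)) M \<phi>)
        sequentially"
      using code \<epsilon> \<delta> \<mu> lm by (intro eventually_approximating_codebooks[OF gc _ res]) auto
    show "eventually (\<lambda>n. ereal (R1 - \<epsilon>) < idrate N n) sequentially"
      using \<epsilon> by (intro less_LiminfD less_le_trans[OF _ lim_rate]) simp
    show "eventually (\<lambda>n. A2_term n (SUP x \<in> cube n (a n) (l n). ereal (quad_norm n (Fmat W n x)))
        < ereal \<epsilon>) sequentially"
      using \<epsilon> lim_F by (intro Limsup_lessD) simp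
    show "eventually (\<lambda>n. mu n < \<mu> + \<epsilon>) sequentially"
      using \<epsilon> by (intro eventually_less_of_limsup_le[OF lim_mu]) simp
    show "eventually (\<lambda>n. lam n < lm + \<epsilon>) sequentially"
      using \<epsilon> by (intro eventually_less_of_limsup_le[OF lim_lam]) simp
    show "eventually (\<lambda>n. ln (ln (l n)) / real n < \<epsilon>) sequentially"
      using \<epsilon> lim_l by (intro eventually_less_of_limsup_le[where a=0]) simp_all
    show "eventually (\<lambda>n. ln (1 + real n * ((ln 5 + ln (1 / \<epsilon>) + 2) + real n)) \<le> \<epsilon> * real n)
        sequentially" by (rule eventually_ln_poly_le[OF \<epsilon>(1)])
    show "eventually (\<lambda>n. 1 \<le> n) sequentially" by (rule eventually_ge_at_top)
  qed
  then obtain n where approx: "\<forall>i\<in>{1..N n}. \<exists>M \<phi>. ln (real M) / real n < R2 + \<epsilon> \<and>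
      approximating_codebook Y W n (Xcost c \<Gamma> n) ((\<delta> + \<epsilon>) / 2) (measure (Q n i \<bind> W n)) M \<phi>"
    and mu: "mu n < \<mu> + \<epsilon>" and lam: "lam n < lm + \<epsilon>" and rate: "ereal (R1 - \<epsilon>) < idrate N n"
    and hl: "ln (ln (l n)) / real n < \<epsilon>"
    and hF: "A2_term n (SUP x \<in> cube n (a n) (l n). ereal (quad_norm n (Fmat W n x))) < ereal \<epsilon>"
    and hpoly: "ln (1 + real n * ((ln 5 + ln (1 / \<epsilon>) + 2) + real n)) \<le> \<epsilon> * real n"
    and n: "1 \<le> n"
    by (blast dest: eventually_happens'[OF sequentially_bot])
  obtain Bq where Bq: "1 \<le> Bq" "\<And>x. x \<in> cube n (a n) (l n) \<Longrightarrow> quad_norm n (Fmat W n x) \<le> Bq"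
    "ln (max 1 (ln Bq)) < \<epsilon> * n"
    using bound_of_A2_term_less[OF hF n] by blast
  have N: "2 \<le> N n" using rate unfolding idrate_def by (cases "N n \<le> 1") auto
  have code_n: "\<And>i. i \<in> {1..N n} \<Longrightarrow> prob_space (Q n i) \<and> sets (Q n i) = sets (Rn n) \<and>
      Dec n i \<in> sets (Yn Y n) \<and> QW W n (Q n i) (space (Yn Y n) - Dec n i) \<le> mu n"
    "\<And>i j. i \<in> {1..N n} \<Longrightarrow> j \<in> {1..N n} \<Longrightarrow> i \<noteq> j \<Longrightarrow> QW W n (Q n j) (Dec n i) \<le> lam n"
    using code n by auto
  have A1_n: "2 \<le> l n" "Xcost c \<Gamma> n \<subseteq> cube n (a n) (l n)" using A1 n by auto
  have A2_n: "\<And>y. y \<in> cube n (a n) (l n) \<Longrightarrow>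
      (\<exists>d>0. \<forall>v\<in>space (Rn n). enorm n (\<lambda>i. v i - y i) < d \<longrightarrow> KLW_finite W n y v) \<and>
      twice_differentiable_at n (KLW W n y) y" using A2 n by blast
  have "ln (ln (l n)) < \<epsilon> * n" using hl n by (simp add: divide_less_eq mult.commute)
  moreover have "\<delta> + 3 * \<epsilon> < 1 - mu n - lam n" using mu lam \<epsilon> by linarith
  ultimately have "ln (ln (real (N n))) / real n \<le> R2 + 3 * \<epsilon>"
    using approx by (intro ln_ln_code_size_le_at_block_length[where Q="Q n" and Dec="Dec n" and
        mu="mu n" and lam="lam n", OF gc n A1_n A2_n Bq(2,1) \<epsilon>(1,2) _ Bq(3) hpoly N code_n]) auto
  then show False using rate N \<epsilon> unfolding idrate_def by simp
qed

theorem lemma6p2: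
  fixes Y :: "'y measure"
    and W :: "nat \<Rightarrow> (nat \<Rightarrow> real) \<Rightarrow> (nat \<Rightarrow> 'y) measure"
    and c :: "nat \<Rightarrow> (nat \<Rightarrow> real) \<Rightarrow> real"
    and \<Gamma> \<delta> \<mu> lm :: real
  assumes "general_channel Y W"
    and "A1_A2 W c \<Gamma>"
    and "\<delta> \<ge> 0" and "\<mu> \<ge> 0" and "lm \<ge> 0"
    and "\<delta> < 1 - \<mu> - lm"
  shows "ID_capacity Y W c \<mu> lm \<Gamma> \<le> Res_capacity Y W c \<delta> \<Gamma>"
proof -
  have "x \<le> y" if "x \<in> {ereal R | R. id_achievable Y W c \<mu> lm \<Gamma> R}"
    and "y \<in> {ereal R | R. \<forall>PX \<in> input_processes c \<Gamma>. res_achievable_for Y W c \<delta> \<Gamma> R PX}" for x y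
    using that id_rate_le_res_rate[OF assms(1,2,4,5,6)] by auto
  then show ?thesis unfolding ID_capacity_def Res_capacity_def by (intro Sup_least Inf_greatest)
qed

end
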